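(* Let $\mathfrak L=\mathbb V\oplus\mathbb W$ be a color gLt-algebra admitting a quasi-multiplicative basis $\mathfrak B=\{e_i\}_{i\in I}$ of $\mathbb W\neq0$. Then $$\mathfrak L=\mathcal U\oplus\Big(\sum_{[i]\in I/\sim}\mathfrak J_{[i]}\Big),$$ where $\mathcal U$ is a linear complement of $\sum_{[i]\in I/\sim}\mathbb V_{[i]}$ in $\mathbb V$ and each $\mathfrak J_{[i]}$ is a color gLt-ideal of $\mathfrak L$ admitting a quasi-multiplicative basis inherited by the one of $\mathfrak L$. Furthermore, $\langle\mathfrak J_{[i]},\mathfrak J_{[h]},\mathfrak L,\dots,\mathfrak L\rangle_\sigma=0$ for every $\sigma\in\mathbb S_n$ whenever $[i]\neq[h]$.
   Context: Let $\mathbb F$ be a field, $\mathbb G$ an abelian group, $n\ge 2$, and $\epsilon:\mathbb G\times\mathbb G\to\mathbb F\setminus\{0\}$ a bicharacter ($\epsilon(k,g+h)=\epsilon(k,g)\epsilon(k,h)$, $\epsilon(g+h,k)=\epsilon(g,k)\epsilon(h,k)$, $\epsilon(g,h)\epsilon(h,g)=1$). A graded $n$-ary algebra is a $\mathbb G$-graded vector space $\mathfrak L=\bigoplus_{g\in\mathbb G}\mathfrak L_g$ with an $n$-linear map $\langle\cdot,\dots,\cdot\rangle:\mathfrak L^n\to\mathfrak L$ such that $\langle\mathfrak L_{g_1},\dots,\mathfrak L_{g_n}\rangle\subset\mathfrak L_{g_1+\dots+g_n}$. For $\sigma\in\mathbb S_n$ write $\langle x_1,\dots,x_n\rangle_\sigma:=\langle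 x_{\sigma(1)},\dots,x_{\sigma(n)}\rangle$; for subsets $A_1,\dots,A_n$, $\langle A_1,\dots,A_n\rangle_\sigma$ denotes the linear span of all $\langle x_1,\dots,x_n\rangle_\sigma$ with $x_r\in A_r$. A color gLt-algebra is a graded $n$-ary algebra satisfying, for each $k=1,\dots,n$ and fixed scalars $\alpha^{\sigma_1,\sigma_2}_{i,j,k}\in\mathbb F$, the color version (each term on the right multiplied by the product of values of $\epsilon$ on the degrees of the homogeneous arguments transposed in passing from the left-hand order to the order of that term) of the identity $\langle y_1,\dots,y_{k-1},\langle x_1,\dots,x_n\rangle,y_k,\dots,y_{n-1}\rangle=\sum_{1\le i,j\le n,\,\sigma_1\in\mathbb S_n,\,\sigma_2\in\mathbb S_{n-1}}\alpha^{\sigma_1,\sigma_2}_{i,j,k}\langle x_{\sigma_1(1)},\dots,x_{\sigma_1(i-1)},\langle y_{\sigma_2(1)},\dots,y_{\sigma_2(j-1)},x_{\sigma_1(i)},y_{\sigma_2(j)},\dots,y_{\sigma_2(n-1)}\rangle,x_{\sigma_1(i+1)},\dots,x_{\sigma_1(n)}\rangle$. A $\mathbb G$-graded subspace $\mathcal I\subset\mathfrak L$ is a color gLt-ideal if $\langle\mathcal I,\mathfrak L,\dots,\mathfrak L\rangle_\sigma\subset\mathcal I$ for every $\sigma\in\mathbb S_n$. $\mathfrak L$ admits a quasi-multiplicative basis if $\mathfrak L=\mathbb V\oplus\mathbb W$ with $\mathbb V$, $\mathbb W\ne0$ graded subspaces and $\mathfrak B=\{e_i\}_{i\in I}$ a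 basis of homogeneous elements of $\mathbb W$ such that: (1) for $i_1,\dots,i_n\in I$, either $\langle e_{i_1},\dots,e_{i_n}\rangle\in\mathbb Fe_j$ for some $j\in I$ or $\langle e_{i_1},\dots,e_{i_n}\rangle\in\mathbb V$; (2) for $0<k<n$, $i_1,\dots,i_k\in I$ and $\sigma\in\mathbb S_n$, $\langle e_{i_1},\dots,e_{i_k},\mathbb V,\dots,\mathbb V\rangle_\sigma\subset\mathbb Fe_{j_\sigma}$ for some $j_\sigma\in I$; (3) either $\langle\mathbb V,\dots,\mathbb V\rangle\subset\mathbb Fe_j$ for some $j\in I$ or $\langle\mathbb V,\dots,\mathbb V\rangle\subset\mathbb V$. A graded subalgebra (or ideal) $\mathfrak S$ has a quasi-multiplicative basis inherited by the one of $\mathfrak L$ if $\mathfrak S=\mathbb V_{\mathfrak S}\oplus\mathbb W_{\mathfrak S}$ with $\mathbb V_{\mathfrak S}$ a graded subspace of $\mathbb V$ and $0\ne\mathbb W_{\mathfrak S}$ a graded subspace of $\mathbb W$ admitting a subset $\mathfrak B'\subset\mathfrak B$ as a basis. Index maps: let $v$ be a symbol not in $I$, $\mathfrak I:=I\,\dot\cup\,\{v\}$; for each $j\in\mathfrak I$ take a new symbol $\overline j$, $\overline I:=\{\overline i:i\in I\}$, $\overline{\mathfrak I}:=\overline I\,\dot\cup\,\{\overline v\}$; set $\overline{(\overline j)}:=j$, $\overline J:=\{\overline j:j\in J\}$ for a set $J$ of symbols ($\overline\emptyset=\emptyset$). Put $u_j:=e_j$ for $j\in I$ and $u_v:=\mathbb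 V$. For $\sigma\in\mathbb S_n$ and $(j_1,\dots,j_n)\in\mathfrak I^n$ let $a_\sigma(j_1,\dots,j_n)=\{r\}$ if $r\in I$ and $0\ne\langle u_{j_1},\dots,u_{j_n}\rangle_\sigma\subset\mathbb Fe_r$, $=\{v\}$ if $0\ne\langle u_{j_1},\dots,u_{j_n}\rangle_\sigma\subset\mathbb V$, and $=\emptyset$ otherwise. For $j,j_2,\dots,j_n\in\mathfrak I$ let $b_\sigma(j,\overline j_2,\dots,\overline j_n):=\{x\in\mathfrak I: a_\sigma(x,j_2,\dots,j_n)=\{j\}\}$. Define $\mu$ on $(\mathfrak I\,\dot\cup\,\overline{\mathfrak I})\times(\mathfrak I^{n-1}\,\dot\cup\,\overline{\mathfrak I}^{n-1})$ with values subsets of $\mathfrak I$ by: $\mu(j,j_1,\dots,j_{n-1})=\bigcup_{\sigma\in\mathbb S_n}a_\sigma(j,j_1,\dots,j_{n-1})$ for $j,j_1,\dots,j_{n-1}\in\mathfrak I$; $\mu(j,\overline j_1,\dots,\overline j_{n-1})=\bigcup_{\sigma\in\mathbb S_n}b_\sigma(j,\overline j_1,\dots,\overline j_{n-1})$ for $j,j_1,\dots,j_{n-1}\in\mathfrak I$; $\mu(\overline j,j_1,\dots,j_{n-1})=\bigcup_{1\le k\le n-1,\ \sigma\in\mathbb S_n}b_\sigma(j_k,\overline j,\overline j_1,\dots,\overline j_{k-1},\overline j_{k+1},\dots,\overline j_{n-1})$ for $j,j_1,\dots,j_{n-1}\in\mathfrak I$; and $\mu(\overline j,\overline j_1,\dots,\overline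 j_{n-1})=\emptyset$. Define $\phi$ on pairs $(J,X)$ with $J\subset I\,\dot\cup\,\overline I$ and $X\in\mathfrak I^{n-1}\,\dot\cup\,\overline{\mathfrak I}^{n-1}$ by $\phi(\emptyset,X)=\emptyset$ and, for $J\ne\emptyset$, $\phi(J,X):=K\cup\overline K$ where $K:=\big(\bigcup_{j\in J}\mu(j,X)\big)\setminus\{v\}$. Connections: for distinct $i,j\in I$, $i$ is connected to $j$ if there exist $t\ge1$, $X_1,\dots,X_t\in\mathfrak I^{n-1}\,\dot\cup\,\overline{\mathfrak I}^{n-1}$ and $\widetilde i\in\{i,\overline i\}$ such that $\phi(\{\widetilde i\},X_1)\ne\emptyset$, …, $\phi(\cdots\phi(\{\widetilde i\},X_1)\cdots,X_{t-1})\ne\emptyset$, and $j\in\phi(\cdots\phi(\phi(\{\widetilde i\},X_1),X_2)\cdots,X_t)$; every $i$ is connected to itself. Being connected is an equivalence relation $\sim$ on $I$; $[i]$ denotes the class of $i$. Define $\mathbb V_{[i]}:=\big(\sum_{i_1,\dots,i_n\in[i]}\mathbb F\langle e_{i_1},\dots,e_{i_n}\rangle\big)\cap\mathbb V$, $\mathbb W_{[i]}:=\bigoplus_{j\in[i]}\mathbb Fe_j$, and $\mathfrak J_{[i]}:=\mathbb V_{[i]}\oplus\mathbb W_{[i]}$. *)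

theory Defs
  imports Complex_Main "HOL-Combinatorics.Permutations"
begin

text \<open>
The field is a type 'f :: field, the graded algebra is the whole type 'v
(an abelian group with a scalar multiplication  scale  making it an 'f-vector space in the
sense of the locale  vector_space  of HOL.Vector_Spaces), the grading group is a type
'g :: ab_group_add.  The n-ary product is a function  prd :: 'v list => 'v  of which only
the values on lists of length n matter.  Positions are 0-based: positions 0..n-1.
Symmetric group S_n = permutations of {..<n}.
\<close>

definition graded_vs :: "('f::field \<Rightarrow> 'v::ab_group_add \<Rightarrow> 'v) \<Rightarrow> ('g \<Rightarrow> 'v set) \<Rightarrow> bool" where
  "graded_vs scale Lg \<longleftrightarrow>
     vector_space scale \<and>
     (\<forall>g. module.subspace scale (Lg g)) \<and>
     (\<forall>x. \<exists>!c. finite {g. c g \<noteq> 0} \<and> (\<forall>g. c g \<in> Lg g) \<and> x = sum c {g. c g \<noteq> 0})"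

definition hom_decomp :: "('g \<Rightarrow> 'v set) \<Rightarrow> 'v::ab_group_add \<Rightarrow> ('g \<Rightarrow> 'v) \<Rightarrow> bool" where
  "hom_decomp Lg x c \<longleftrightarrow> finite {g. c g \<noteq> 0} \<and> (\<forall>g. c g \<in> Lg g) \<and> x = sum c {g. c g \<noteq> 0}"

definition graded_subspace :: "('f::field \<Rightarrow> 'v::ab_group_add \<Rightarrow> 'v) \<Rightarrow> ('g \<Rightarrow> 'v set) \<Rightarrow> 'v set \<Rightarrow> bool" where
  "graded_subspace scale Lg S \<longleftrightarrow>
     module.subspace scale S \<and> (\<forall>x\<in>S. \<forall>c. hom_decomp Lg x c \<longrightarrow> (\<forall>g. c g \<in> S))"

definition homogeneous :: "('g \<Rightarrow> 'v set) \<Rightarrow> 'v \<Rightarrow> bool" where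
  "homogeneous Lg x \<longleftrightarrow> (\<exists>g. x \<in> Lg g)"

definition setsum2 :: "'v::ab_group_add set \<Rightarrow> 'v set \<Rightarrow> 'v set" where
  "setsum2 A B = {a + b | a b. a \<in> A \<and> b \<in> B}"

definition direct_sum_eq :: "'v::ab_group_add set \<Rightarrow> 'v set \<Rightarrow> 'v set \<Rightarrow> bool" where
  "direct_sum_eq S A B \<longleftrightarrow> S = setsum2 A B \<and> A \<inter> B = {0}"

definition bicharacter :: "('g::ab_group_add \<Rightarrow> 'g \<Rightarrow> 'f::field) \<Rightarrow> bool" where
  "bicharacter \<epsilon> \<longleftrightarrow>
     (\<forall>g h. \<epsilon> g h \<noteq> 0) \<and>
     (\<forall>k g h. \<epsilon> k (g + h) = \<epsilon> k g * \<epsilon> k h) \<and>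
     (\<forall>k g h. \<epsilon> (g + h) k = \<epsilon> g k * \<epsilon> h k) \<and>
     (\<forall>g h. \<epsilon> g h * \<epsilon> h g = 1)"

definition graded_nary_algebra ::
  "('f::field \<Rightarrow> 'v::ab_group_add \<Rightarrow> 'v) \<Rightarrow> ('g::ab_group_add \<Rightarrow> 'v set) \<Rightarrow> nat \<Rightarrow> ('v list \<Rightarrow> 'v) \<Rightarrow> bool" where
  "graded_nary_algebra scale Lg n prd \<longleftrightarrow>
     graded_vs scale Lg \<and>
     (\<forall>xs. length xs = n \<longrightarrow> (\<forall>r<n. Vector_Spaces.linear scale scale (\<lambda>x. prd (xs[r := x])))) \<and>
     (\<forall>xs ds. length xs = n \<longrightarrow> (\<forall>r<n. xs ! r \<in> Lg (ds r)) \<longrightarrow> prd xs \<in> Lg (\<Sum>r<n. ds r))"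

definition prod_perm :: "nat \<Rightarrow> ('v list \<Rightarrow> 'v) \<Rightarrow> (nat \<Rightarrow> nat) \<Rightarrow> 'v list \<Rightarrow> 'v" where
  "prod_perm n prd \<sigma> xs = prd (map (\<lambda>t. xs ! \<sigma> t) [0..<n])"

definition prod_sets ::
  "('f::field \<Rightarrow> 'v::ab_group_add \<Rightarrow> 'v) \<Rightarrow> nat \<Rightarrow> ('v list \<Rightarrow> 'v) \<Rightarrow> (nat \<Rightarrow> nat) \<Rightarrow> 'v set list \<Rightarrow> 'v set" where
  "prod_sets scale n prd \<sigma> As =
     module.span scale {prod_perm n prd \<sigma> xs | xs. length xs = n \<and> (\<forall>r<n. xs ! r \<in> As ! r)}"

text \<open>Colour factor: the elements of a word are labelled; passing from the order  old  to the
order  new  (a rearrangement of the same distinct labels) every pair of labels (u,w) with u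
before w in  old  but w before u in  new  contributes the factor eps(deg u, deg w).\<close>
definition pos_in :: "'l list \<Rightarrow> 'l \<Rightarrow> nat" where
  "pos_in xs x = (LEAST p. p < length xs \<and> xs ! p = x)"

definition color_factor ::
  "('g \<Rightarrow> 'g \<Rightarrow> 'f::field) \<Rightarrow> ('l \<Rightarrow> 'g) \<Rightarrow> 'l list \<Rightarrow> 'l list \<Rightarrow> 'f" where
  "color_factor \<epsilon> deg old new =
     (\<Prod>(a, b) \<in> {(a, b). a < b \<and> b < length old \<and> pos_in new (old ! b) < pos_in new (old ! a)}.
        \<epsilon> (deg (old ! a)) (deg (old ! b)))"

text \<open>Labels: Inl r stands for x_r (r < n), Inr s for y_s (s < n-1).  k is the 0-based
insertion position (k = 0..n-1, corresponding to k+1 = 1..n in the paper); i, j are 0-based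
(i = 0..n-1 corresponding to i+1, and j = 0..n-1 corresponding to j+1).\<close>

definition gLt_lhs_labels :: "nat \<Rightarrow> nat \<Rightarrow> (nat + nat) list" where
  "gLt_lhs_labels n k = map Inr [0..<k] @ map Inl [0..<n] @ map Inr [k..<n - 1]"

definition gLt_rhs_labels :: "nat \<Rightarrow> nat \<Rightarrow> nat \<Rightarrow> (nat \<Rightarrow> nat) \<Rightarrow> (nat \<Rightarrow> nat) \<Rightarrow> (nat + nat) list" where
  "gLt_rhs_labels n i j \<sigma>1 \<sigma>2 =
     map (\<lambda>t. Inl (\<sigma>1 t)) [0..<i] @ map (\<lambda>t. Inr (\<sigma>2 t)) [0..<j] @ [Inl (\<sigma>1 i)]
     @ map (\<lambda>t. Inr (\<sigma>2 t)) [j..<n - 1] @ map (\<lambda>t. Inl (\<sigma>1 t)) [Suc i..<n]"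

definition gLt_lhs :: "nat \<Rightarrow> ('v list \<Rightarrow> 'v) \<Rightarrow> nat \<Rightarrow> 'v list \<Rightarrow> 'v list \<Rightarrow> 'v" where
  "gLt_lhs n prd k xs ys = prd (take k ys @ [prd xs] @ drop k ys)"

definition gLt_rhs_term ::
  "nat \<Rightarrow> ('v list \<Rightarrow> 'v) \<Rightarrow> nat \<Rightarrow> nat \<Rightarrow> (nat \<Rightarrow> nat) \<Rightarrow> (nat \<Rightarrow> nat) \<Rightarrow> 'v list \<Rightarrow> 'v list \<Rightarrow> 'v" where
  "gLt_rhs_term n prd i j \<sigma>1 \<sigma>2 xs ys =
     prd (map (\<lambda>t. xs ! \<sigma>1 t) [0..<i]
           @ [prd (map (\<lambda>t. ys ! \<sigma>2 t) [0..<j] @ [xs ! \<sigma>1 i] @ map (\<lambda>t. ys ! \<sigma>2 t) [j..<n - 1])]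
           @ map (\<lambda>t. xs ! \<sigma>1 t) [Suc i..<n])"

definition color_gLt_algebra ::
  "('f::field \<Rightarrow> 'v::ab_group_add \<Rightarrow> 'v) \<Rightarrow> ('g::ab_group_add \<Rightarrow> 'v set) \<Rightarrow> ('g \<Rightarrow> 'g \<Rightarrow> 'f)
   \<Rightarrow> nat \<Rightarrow> ('v list \<Rightarrow> 'v) \<Rightarrow> bool" where
  "color_gLt_algebra scale Lg \<epsilon> n prd \<longleftrightarrow>
     graded_nary_algebra scale Lg n prd \<and>
     (\<exists>\<alpha> :: nat \<Rightarrow> nat \<Rightarrow> nat \<Rightarrow> (nat \<Rightarrow> nat) \<Rightarrow> (nat \<Rightarrow> nat) \<Rightarrow> 'f.
        \<forall>k<n. \<forall>xs ys dx dy.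
          length xs = n \<longrightarrow> length ys = n - 1 \<longrightarrow>
          (\<forall>r<n. xs ! r \<in> Lg (dx r)) \<longrightarrow> (\<forall>s<n - 1. ys ! s \<in> Lg (dy s)) \<longrightarrow>
          gLt_lhs n prd k xs ys =
            (\<Sum>i<n. \<Sum>j<n. \<Sum>\<sigma>1\<in>{p. p permutes {..<n}}. \<Sum>\<sigma>2\<in>{p. p permutes {..<n - 1}}.
               scale (\<alpha> i j k \<sigma>1 \<sigma>2 *
                      color_factor \<epsilon> (case_sum dx dy) (gLt_lhs_labels n k) (gLt_rhs_labels n i j \<sigma>1 \<sigma>2))
                     (gLt_rhs_term n prd i j \<sigma>1 \<sigma>2 xs ys)))"

definition color_gLt_ideal ::
  "('f::field \<Rightarrow> 'v::ab_group_add \<Rightarrow> 'v) \<Rightarrow> ('g \<Rightarrow> 'v set) \<Rightarrow> nat \<Rightarrow> ('v list \<Rightarrow> 'v) \<Rightarrow> 'v set \<Rightarrow> bool" where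
  "color_gLt_ideal scale Lg n prd J \<longleftrightarrow>
     graded_subspace scale Lg J \<and>
     (\<forall>\<sigma>. \<sigma> permutes {..<n} \<longrightarrow> prod_sets scale n prd \<sigma> (J # replicate (n - 1) UNIV) \<subseteq> J)"

definition line :: "('f::field \<Rightarrow> 'v::ab_group_add \<Rightarrow> 'v) \<Rightarrow> 'v \<Rightarrow> 'v set" where
  "line scale x = range (\<lambda>c. scale c x)"

definition qm_basis ::
  "('f::field \<Rightarrow> 'v::ab_group_add \<Rightarrow> 'v) \<Rightarrow> ('g \<Rightarrow> 'v set) \<Rightarrow> nat \<Rightarrow> ('v list \<Rightarrow> 'v)
   \<Rightarrow> 'v set \<Rightarrow> 'v set \<Rightarrow> 'i set \<Rightarrow> ('i \<Rightarrow> 'v) \<Rightarrow> bool" where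
  "qm_basis scale Lg n prd V W I e \<longleftrightarrow>
     graded_subspace scale Lg V \<and> graded_subspace scale Lg W \<and>
     direct_sum_eq UNIV V W \<and> V \<noteq> {0} \<and> W \<noteq> {0} \<and>
     inj_on e I \<and> \<not> module.dependent scale (e ` I) \<and> module.span scale (e ` I) = W \<and>
     (\<forall>i\<in>I. homogeneous Lg (e i)) \<and>
     (\<forall>ks. length ks = n \<longrightarrow> set ks \<subseteq> I \<longrightarrow>
        (\<exists>j\<in>I. prd (map e ks) \<in> line scale (e j)) \<or> prd (map e ks) \<in> V) \<and>
     (\<forall>k ks \<sigma>. 0 < k \<longrightarrow> k < n \<longrightarrow> length ks = k \<longrightarrow> set ks \<subseteq> I \<longrightarrow> \<sigma> permutes {..<n} \<longrightarrow>
        (\<exists>j\<in>I. prod_sets scale n prd \<sigma> (map (\<lambda>i. {e i}) ks @ replicate (n - k) V) \<subseteq> line scale (e j))) \<and>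
     ((\<exists>j\<in>I. prod_sets scale n prd id (replicate n V) \<subseteq> line scale (e j)) \<or>
       prod_sets scale n prd id (replicate n V) \<subseteq> V)"

definition inherited_qm_basis ::
  "('f::field \<Rightarrow> 'v::ab_group_add \<Rightarrow> 'v) \<Rightarrow> ('g \<Rightarrow> 'v set) \<Rightarrow> 'v set \<Rightarrow> 'v set \<Rightarrow> 'i set \<Rightarrow> ('i \<Rightarrow> 'v)
   \<Rightarrow> 'v set \<Rightarrow> bool" where
  "inherited_qm_basis scale Lg V W I e S \<longleftrightarrow>
     (\<exists>VS WS I'. graded_subspace scale Lg VS \<and> VS \<subseteq> V \<and>
        graded_subspace scale Lg WS \<and> WS \<subseteq> W \<and> WS \<noteq> {0} \<and>
        I' \<subseteq> I \<and> \<not> module.dependent scale (e ` I') \<and> module.span scale (e ` I') = WS \<and>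
        direct_sum_eq S VS WS)"

text \<open>The set frak I = I disjoint-union {v} is modelled by 'i option, None playing the role of v.
Barred symbols are modelled by pairs (True, j); unbarred by (False, j).\<close>

definition Iv :: "'i set \<Rightarrow> 'i option set" where
  "Iv I = insert None (Some ` I)"

definition u_set :: "'v set \<Rightarrow> ('i \<Rightarrow> 'v) \<Rightarrow> 'i option \<Rightarrow> 'v set" where
  "u_set V e j = (case j of None \<Rightarrow> V | Some i \<Rightarrow> {e i})"

definition a_map ::
  "('f::field \<Rightarrow> 'v::ab_group_add \<Rightarrow> 'v) \<Rightarrow> nat \<Rightarrow> ('v list \<Rightarrow> 'v) \<Rightarrow> 'v set \<Rightarrow> 'i set \<Rightarrow> ('i \<Rightarrow> 'v)
   \<Rightarrow> (nat \<Rightarrow> nat) \<Rightarrow> 'i option list \<Rightarrow> 'i option set" where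
  "a_map scale n prd V I e \<sigma> js =
     (let P = prod_sets scale n prd \<sigma> (map (u_set V e) js) in
      {Some r | r. r \<in> I \<and> P \<noteq> {0} \<and> P \<subseteq> line scale (e r)} \<union>
      (if P \<noteq> {0} \<and> P \<subseteq> V then {None} else {}))"

definition b_map ::
  "('f::field \<Rightarrow> 'v::ab_group_add \<Rightarrow> 'v) \<Rightarrow> nat \<Rightarrow> ('v list \<Rightarrow> 'v) \<Rightarrow> 'v set \<Rightarrow> 'i set \<Rightarrow> ('i \<Rightarrow> 'v)
   \<Rightarrow> (nat \<Rightarrow> nat) \<Rightarrow> 'i option \<Rightarrow> 'i option list \<Rightarrow> 'i option set" where
  "b_map scale n prd V I e \<sigma> j js = {x \<in> Iv I. a_map scale n prd V I e \<sigma> (x # js) = {j}}"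

text \<open>mu (bj, j) (bX, js): bj = True means the first argument is barred, bX = True means all
entries of the (n-1)-tuple js are barred.\<close>
definition mu_map ::
  "('f::field \<Rightarrow> 'v::ab_group_add \<Rightarrow> 'v) \<Rightarrow> nat \<Rightarrow> ('v list \<Rightarrow> 'v) \<Rightarrow> 'v set \<Rightarrow> 'i set \<Rightarrow> ('i \<Rightarrow> 'v)
   \<Rightarrow> bool \<times> 'i option \<Rightarrow> bool \<times> 'i option list \<Rightarrow> 'i option set" where
  "mu_map scale n prd V I e J X =
     (case (J, X) of
        ((False, j), (False, js)) \<Rightarrow>
           (\<Union>\<sigma>\<in>{p. p permutes {..<n}}. a_map scale n prd V I e \<sigma> (j # js))
      | ((False, j), (True, js)) \<Rightarrow>
           (\<Union>\<sigma>\<in>{p. p permutes {..<n}}. b_map scale n prd V I e \<sigma> j js)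
      | ((True, j), (False, js)) \<Rightarrow>
           (\<Union>k<n - 1. \<Union>\<sigma>\<in>{p. p permutes {..<n}}.
              b_map scale n prd V I e \<sigma> (js ! k) (j # take k js @ drop (Suc k) js))
      | ((True, j), (True, js)) \<Rightarrow> {})"

definition phi_map ::
  "('f::field \<Rightarrow> 'v::ab_group_add \<Rightarrow> 'v) \<Rightarrow> nat \<Rightarrow> ('v list \<Rightarrow> 'v) \<Rightarrow> 'v set \<Rightarrow> 'i set \<Rightarrow> ('i \<Rightarrow> 'v)
   \<Rightarrow> (bool \<times> 'i option) set \<Rightarrow> bool \<times> 'i option list \<Rightarrow> (bool \<times> 'i option) set" where
  "phi_map scale n prd V I e J X =
     (if J = {} then {}
      else (let K = (\<Union>j\<in>J. mu_map scale n prd V I e j X) - {None} in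
            {(False, k) | k. k \<in> K} \<union> {(True, k) | k. k \<in> K}))"

definition admissible_X :: "nat \<Rightarrow> 'i set \<Rightarrow> bool \<times> 'i option list \<Rightarrow> bool" where
  "admissible_X n I X \<longleftrightarrow> length (snd X) = n - 1 \<and> set (snd X) \<subseteq> Iv I"

definition connected_idx ::
  "('f::field \<Rightarrow> 'v::ab_group_add \<Rightarrow> 'v) \<Rightarrow> nat \<Rightarrow> ('v list \<Rightarrow> 'v) \<Rightarrow> 'v set \<Rightarrow> 'i set \<Rightarrow> ('i \<Rightarrow> 'v)
   \<Rightarrow> 'i \<Rightarrow> 'i \<Rightarrow> bool" where
  "connected_idx scale n prd V I e i j \<longleftrightarrow>
     i \<in> I \<and> j \<in> I \<and>
     (i = j \<or>
      (\<exists>Xs it. Xs \<noteq> [] \<and> (\<forall>X\<in>set Xs. admissible_X n I X) \<and>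
         it \<in> {(False, Some i), (True, Some i)} \<and>
         (\<forall>m. 0 < m \<longrightarrow> m < length Xs \<longrightarrow> foldl (phi_map scale n prd V I e) {it} (take m Xs) \<noteq> {}) \<and>
         (False, Some j) \<in> foldl (phi_map scale n prd V I e) {it} Xs))"

definition conn_class ::
  "('f::field \<Rightarrow> 'v::ab_group_add \<Rightarrow> 'v) \<Rightarrow> nat \<Rightarrow> ('v list \<Rightarrow> 'v) \<Rightarrow> 'v set \<Rightarrow> 'i set \<Rightarrow> ('i \<Rightarrow> 'v)
   \<Rightarrow> 'i \<Rightarrow> 'i set" where
  "conn_class scale n prd V I e i = {j. connected_idx scale n prd V I e i j}"

definition V_class ::
  "('f::field \<Rightarrow> 'v::ab_group_add \<Rightarrow> 'v) \<Rightarrow> nat \<Rightarrow> ('v list \<Rightarrow> 'v) \<Rightarrow> 'v set \<Rightarrow> 'i set \<Rightarrow> ('i \<Rightarrow> 'v)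
   \<Rightarrow> 'i \<Rightarrow> 'v set" where
  "V_class scale n prd V I e i =
     module.span scale {prd (map e ks) | ks. length ks = n \<and> set ks \<subseteq> conn_class scale n prd V I e i} \<inter> V"

definition W_class ::
  "('f::field \<Rightarrow> 'v::ab_group_add \<Rightarrow> 'v) \<Rightarrow> nat \<Rightarrow> ('v list \<Rightarrow> 'v) \<Rightarrow> 'v set \<Rightarrow> 'i set \<Rightarrow> ('i \<Rightarrow> 'v)
   \<Rightarrow> 'i \<Rightarrow> 'v set" where
  "W_class scale n prd V I e i = module.span scale (e ` conn_class scale n prd V I e i)"

definition J_class ::
  "('f::field \<Rightarrow> 'v::ab_group_add \<Rightarrow> 'v) \<Rightarrow> nat \<Rightarrow> ('v list \<Rightarrow> 'v) \<Rightarrow> 'v set \<Rightarrow> 'i set \<Rightarrow> ('i \<Rightarrow> 'v)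
   \<Rightarrow> 'i \<Rightarrow> 'v set" where
  "J_class scale n prd V I e i = setsum2 (V_class scale n prd V I e i) (W_class scale n prd V I e i)"

end

theory Submission
  imports Defs
begin

text \<open>
  The axioms of a quasi-multiplicative basis make the index map single-valued on every nonzero
  product of basis vectors and elements of \<open>V\<close>, and connection is the equivalence relation
  generated by the symmetric relation "\<open>b\<close> is obtained from \<open>a\<close> by one application of \<open>\<mu>\<close>".
  Hence a nonzero such product containing \<open>e a\<close> lies either on a line \<open>F e j\<close> with \<open>j \<sim> a\<close>,
  or in \<open>V\<close>, and then all its factors are basis vectors of the class of \<open>a\<close>.

  By multilinearity, products with a slot in \<open>J[i]\<close> reduce to products whose slots are such
  generators, except that a slot may hold a product of basis vectors of \<open>[i]\<close> (an element of
  \<open>V[i]\<close>).  The gLt identity rewrites such a nested product as a combination of products in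
  which a basis vector of \<open>[i]\<close> occupies a slot of the outer product, which settles the ideal
  property; the same two reductions show that products with slots in \<open>J[i]\<close> and \<open>J[h]\<close> vanish
  for \<open>[i] \<noteq> [h]\<close>.  The colour factors only enter as scalars.  The decomposition of \<open>L\<close> is linear algebra, since the span of the
  \<open>J[i]\<close> contains \<open>W\<close> and the \<open>V[i]\<close> and is contained in \<open>W + \<Sum> V[i]\<close>.
\<close>

lemma prod_perm_eq_permute_list:
  "length xs = n \<Longrightarrow> prod_perm n prd \<sigma> xs = prd (permute_list \<sigma> xs)"
  by (simp add: prod_perm_def permute_list_def)

lemma permute_list_slots:
  assumes len: "length As = n" and \<tau>: "\<tau> permutes {..<n}"
  shows "{xs. length xs = n \<and> (\<forall>r<n. xs ! r \<in> permute_list \<tau> As ! r)}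
       = permute_list \<tau> ` {ys. length ys = n \<and> (\<forall>r<n. ys ! r \<in> As ! r)}"
proof (intro equalityI subsetI)
  fix xs assume xs: "xs \<in> {xs. length xs = n \<and> (\<forall>r<n. xs ! r \<in> permute_list \<tau> As ! r)}"
  have \<tau>': "inv \<tau> permutes {..<n}" using \<tau> by (rule permutes_inv)
  have "permute_list \<tau> (permute_list (inv \<tau>) xs) = permute_list (inv \<tau> \<circ> \<tau>) xs"
    using xs \<tau> by (simp add: permute_list_compose)
  also have "\<dots> = xs" using permutes_inv_o(2)[OF \<tau>] by simp
  finally have "xs = permute_list \<tau> (permute_list (inv \<tau>) xs)" ..
  moreover have "permute_list (inv \<tau>) xs ! r \<in> As ! r" if "r < n" for r
  proof -
    have "inv \<tau> r < n" using permutes_in_image[OF \<tau>'] that by simp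
    then show ?thesis
      using xs that len \<tau> \<tau>' by (auto simp: permute_list_nth permutes_inverses(1))
  qed
  ultimately show "xs \<in> permute_list \<tau> ` {ys. length ys = n \<and> (\<forall>r<n. ys ! r \<in> As ! r)}"
    using xs by (intro image_eqI) auto
next
  fix xs assume "xs \<in> permute_list \<tau> ` {ys. length ys = n \<and> (\<forall>r<n. ys ! r \<in> As ! r)}"
  then obtain ys where "xs = permute_list \<tau> ys" "length ys = n" "\<forall>r<n. ys ! r \<in> As ! r" by blast
  then show "xs \<in> {xs. length xs = n \<and> (\<forall>r<n. xs ! r \<in> permute_list \<tau> As ! r)}"
    using len \<tau> permutes_in_image[OF \<tau>] by (auto simp: permute_list_nth)
qed

lemma prod_sets_permute_list:
  assumes len: "length As = n" and \<tau>: "\<tau> permutes {..<n}" and \<sigma>: "\<sigma> permutes {..<n}"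
  shows "prod_sets scale n prd \<sigma> (permute_list \<tau> As) = prod_sets scale n prd (\<tau> \<circ> \<sigma>) As"
proof -
  have "prod_perm n prd \<sigma> (permute_list \<tau> ys) = prod_perm n prd (\<tau> \<circ> \<sigma>) ys" if "length ys = n" for ys
    using that \<sigma> by (simp add: prod_perm_eq_permute_list permute_list_compose)
  then have "(\<lambda>xs. prod_perm n prd \<sigma> xs) ` {xs. length xs = n \<and> (\<forall>r<n. xs ! r \<in> permute_list \<tau> As ! r)}
      = (\<lambda>ys. prod_perm n prd (\<tau> \<circ> \<sigma>) ys) ` {ys. length ys = n \<and> (\<forall>r<n. ys ! r \<in> As ! r)}"
    unfolding permute_list_slots[OF len \<tau>] image_image by (intro image_cong) auto
  then show ?thesis by (simp add: prod_sets_def setcompr_eq_image)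
qed

lemma permute_list_to_front:
  assumes r: "r < length xs" and r': "r' < length xs" and rr': "r \<noteq> r'"
  obtains \<tau> where "\<tau> permutes {..<length xs}"
    "permute_list \<tau> xs = xs ! r # xs ! r' # drop 2 (permute_list \<tau> xs)"
proof
  define r1 where "r1 = Transposition.transpose 0 r r'"
  have r1: "r1 \<noteq> 0" "r1 < length xs" using r r' rr' by (auto simp: r1_def transpose_def)
  define \<tau> where "\<tau> = Transposition.transpose 0 r \<circ> Transposition.transpose 1 r1"
  show \<tau>: "\<tau> permutes {..<length xs}"
    unfolding \<tau>_def using r r1 rr' by (intro permutes_compose permutes_swap_id) auto
  have "\<tau> 0 = r" "\<tau> 1 = r'" using r1 by (auto simp: \<tau>_def r1_def)
  moreover have "2 \<le> length xs" using r r' rr' by linarith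
  ultimately show "permute_list \<tau> xs = xs ! r # xs ! r' # drop 2 (permute_list \<tau> xs)"
    using \<tau> by (intro nth_equalityI) (auto simp: permute_list_nth nth_Cons split: nat.split)
qed

lemma nth_map_upt_replace:
  "i < n \<Longrightarrow> q < n \<Longrightarrow> (map f [0..<i] @ [x] @ map f [Suc i..<n]) ! q = (if q = i then x else f q)"
  by (auto simp: nth_append nth_Cons' not_less)

lemma nth_map_upt_insert:
  "j < n \<Longrightarrow> t < n - 1 \<Longrightarrow>
    (map g [0..<j] @ [x] @ map g [j..<n - 1]) ! (if t < j then t else Suc t) = g t"
  by (auto simp: nth_append nth_Cons' not_less)

lemma nth_remove_nth:
  "r0 < length zs \<Longrightarrow> s < length zs - 1 \<Longrightarrow>
    (take r0 zs @ drop (Suc r0) zs) ! s = zs ! (if s < r0 then s else Suc s)"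
  by (auto simp: nth_append)

context vector_space
begin

lemma subspace_setsum2: "subspace A \<Longrightarrow> subspace B \<Longrightarrow> subspace (setsum2 A B)"
  unfolding setsum2_def by (rule subspace_sums)

lemma direct_sum_exchange:
  assumes L: "direct_sum_eq UNIV V W" and U: "direct_sum_eq V U S"
    and subspaces: "subspace V" "subspace U" "subspace S" "subspace T"
    and T: "S \<subseteq> T" "W \<subseteq> T" "T \<subseteq> setsum2 S W"
  shows "direct_sum_eq UNIV U T"
proof -
  have V: "V = setsum2 U S" and US: "U \<inter> S = {0}" and VW: "V \<inter> W = {0}"
    using U L by (simp_all add: direct_sum_eq_def)
  have "x \<in> setsum2 U T" for x
  proof -
    have "x \<in> setsum2 V W" using L by (simp add: direct_sum_eq_def)
    then obtain v w where x: "x = v + w" "v \<in> V" "w \<in> W" by (auto simp: setsum2_def)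
    then obtain u s where v: "v = u + s" "u \<in> U" "s \<in> S" using V by (auto simp: setsum2_def)
    have "s + w \<in> T" using v(3) x(3) T(1,2) subspace_add[OF subspaces(4)] by blast
    moreover have "x = u + (s + w)" using x(1) v(1) by (simp add: add.assoc)
    ultimately show ?thesis using v(2) unfolding setsum2_def by blast
  qed
  moreover have "u = 0" if u: "u \<in> U" "u \<in> T" for u
  proof -
    obtain s w where sw: "u = s + w" "s \<in> S" "w \<in> W" using u(2) T(3) by (auto simp: setsum2_def)
    have "u \<in> V" "s \<in> V"
      using u(1) sw(2) subspace_0[OF subspaces(2)] subspace_0[OF subspaces(3)]
      unfolding V setsum2_def by force+
    then have "w \<in> V" using sw(1) subspace_diff[OF subspaces(1)] by (metis add_diff_cancel_left')
    then have "w = 0" using sw(3) VW by blast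
    then show "u = 0" using u(1) sw(1,2) US by auto
  qed
  moreover have "0 \<in> U" "0 \<in> T" using subspaces by (simp_all add: subspace_0)
  ultimately show ?thesis unfolding direct_sum_eq_def by blast
qed

end

section \<open>Multilinear products\<close>

locale nary_product = vector_space scale
  for scale :: "'f::field \<Rightarrow> 'v::ab_group_add \<Rightarrow> 'v" +
  fixes n :: nat and prd :: "'v list \<Rightarrow> 'v"
  assumes linear_in_slot:
    "length xs = n \<Longrightarrow> r < n \<Longrightarrow> Vector_Spaces.linear scale scale (\<lambda>x. prd (xs[r := x]))"
begin

lemma prd_eq_0_if_slot_0: "length xs = n \<Longrightarrow> r < n \<Longrightarrow> xs ! r = 0 \<Longrightarrow> prd xs = 0"
  using vector_space_pair.linear_0[OF vector_space_pair.intro linear_in_slot]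
  by (metis list_update_id vector_space_axioms)

lemma prd_mem_subspace_from_spans:
  assumes T: "subspace T" and len: "length xs = n" and slots: "\<forall>r<n. xs ! r \<in> span (A r)"
    and gens: "\<And>ys. length ys = n \<Longrightarrow> \<forall>r<n. ys ! r \<in> A r \<Longrightarrow> prd ys \<in> T"
  shows "prd xs \<in> T"
proof -
  have "prd xs \<in> T" if "m \<le> n" "length xs = n" "\<forall>r<m. xs ! r \<in> span (A r)"
    "\<forall>r<n. m \<le> r \<longrightarrow> xs ! r \<in> A r" for m xs
    using that
  proof (induction m arbitrary: xs)
    case 0
    then show ?case using gens by auto
  next
    case (Suc m)
    let ?f = "\<lambda>x. prd (xs[m := x])"
    have "A m \<subseteq> ?f -` T"
      using Suc.prems by (auto intro!: Suc.IH simp: nth_list_update)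
    moreover have "subspace (?f -` T)"
      using vector_space_pair.linear_subspace_vimage[OF vector_space_pair.intro linear_in_slot]
        vector_space_axioms Suc.prems T by simp
    ultimately have "span (A m) \<subseteq> ?f -` T" by (rule span_minimal)
    then show ?case using Suc.prems by auto
  qed
  from this[OF order.refl len] slots show ?thesis by auto
qed

lemma prod_sets_singletons:
  assumes "length xs = n"
  shows "prod_sets scale n prd id (map (\<lambda>x. {x}) xs) = span {prd xs}"
proof -
  have "ys = xs" if "length ys = n" "\<forall>r<n. ys ! r \<in> map (\<lambda>x. {x}) xs ! r" for ys
    using that assms by (intro nth_equalityI) auto
  moreover have "prod_perm n prd id ys = prd ys" if "length ys = n" for ys
    using that by (simp add: prod_perm_eq_permute_list)
  ultimately have "{prod_perm n prd id ys | ys. length ys = n \<and> (\<forall>r<n. ys ! r \<in> map (\<lambda>x. {x}) xs ! r)} = {prd xs}"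
    using assms by (auto intro!: exI[of _ xs])
  then show ?thesis by (simp add: prod_sets_def)
qed

definition absorbs :: "'v set \<Rightarrow> 'v set \<Rightarrow> bool" where
  "absorbs A T \<longleftrightarrow> (\<forall>zs r. length zs = n \<longrightarrow> r < n \<longrightarrow> zs ! r \<in> A \<longrightarrow> prd zs \<in> T)"

definition annihilates :: "'v set \<Rightarrow> 'v set \<Rightarrow> bool" where
  "annihilates A B \<longleftrightarrow> (\<forall>zs r r'. length zs = n \<longrightarrow> r < n \<longrightarrow> r' < n \<longrightarrow> r \<noteq> r' \<longrightarrow>
     zs ! r \<in> A \<longrightarrow> zs ! r' \<in> B \<longrightarrow> prd zs = 0)"

lemma absorbs_span:
  assumes T: "subspace T" and A: "absorbs A T"
  shows "absorbs (span A) T"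
  unfolding absorbs_def
proof (intro allI impI)
  fix zs r assume zs: "length zs = n" "r < n" "zs ! r \<in> span A"
  show "prd zs \<in> T"
  proof (rule prd_mem_subspace_from_spans[OF T zs(1), of "\<lambda>q. if q = r then A else UNIV"])
    show "\<forall>q<n. zs ! q \<in> span (if q = r then A else UNIV)" using zs by simp
    fix ys assume "length ys = n" "\<forall>q<n. ys ! q \<in> (if q = r then A else UNIV)"
    then show "prd ys \<in> T" using A zs(2) unfolding absorbs_def by (metis (full_types))
  qed
qed

lemma absorbs_mono: "absorbs A' T \<Longrightarrow> A \<subseteq> A' \<Longrightarrow> absorbs A T"
  unfolding absorbs_def by blast

lemma annihilates_mono: "annihilates A' B' \<Longrightarrow> A \<subseteq> A' \<Longrightarrow> B \<subseteq> B' \<Longrightarrow> annihilates A B"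
  unfolding annihilates_def by blast

lemma annihilates_sym: "annihilates A B \<Longrightarrow> annihilates B A"
  unfolding annihilates_def by metis

lemma annihilates_Un: "annihilates A C \<Longrightarrow> annihilates B C \<Longrightarrow> annihilates (A \<union> B) C"
  unfolding annihilates_def by blast

lemma annihilates_span:
  assumes "annihilates A B"
  shows "annihilates (span A) (span B)"
  unfolding annihilates_def
proof (intro allI impI)
  fix zs r r' assume zs: "length zs = n" "r < n" "r' < n" "r \<noteq> r'" "zs ! r \<in> span A" "zs ! r' \<in> span B"
  have "prd zs \<in> {0}"
  proof (rule prd_mem_subspace_from_spans[OF subspace_single_0 zs(1),
        of "\<lambda>q. if q = r then A else if q = r' then B else UNIV"])
    show "\<forall>q<n. zs ! q \<in> span (if q = r then A else if q = r' then B else UNIV)"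
      using zs by simp
    fix ys assume ys: "length ys = n" "\<forall>q<n. ys ! q \<in> (if q = r then A else if q = r' then B else UNIV)"
    then have "ys ! r \<in> A" "ys ! r' \<in> B" using zs(2-4) by (metis (full_types))+
    then show "prd ys \<in> {0}" using assms ys(1) zs(2-4) unfolding annihilates_def by blast
  qed
  then show "prd zs = 0" by simp
qed

lemma prod_sets_subset_if_absorbs:
  assumes T: "subspace T" and A: "absorbs A T" and \<sigma>: "\<sigma> permutes {..<n}" and n: "0 < n"
  shows "prod_sets scale n prd \<sigma> (A # replicate (n - 1) UNIV) \<subseteq> T"
  unfolding prod_sets_def
proof (rule span_minimal[OF _ T], rule subsetI)
  fix y assume "y \<in> {prod_perm n prd \<sigma> xs |xs. length xs = n \<and> (\<forall>r<n. xs ! r \<in> (A # replicate (n - 1) UNIV) ! r)}"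
  then obtain xs where y: "y = prod_perm n prd \<sigma> xs"
    and xs: "length xs = n" "\<forall>r<n. xs ! r \<in> (A # replicate (n - 1) UNIV) ! r" by blast
  have "inv \<sigma> 0 < n" "permute_list \<sigma> xs ! inv \<sigma> 0 = xs ! 0"
    using permutes_in_image[OF permutes_inv[OF \<sigma>]] n xs(1) \<sigma>
    by (auto simp: permute_list_nth permutes_inverses(1))
  moreover have "xs ! 0 \<in> A" using xs(2)[rule_format, of 0] n by simp
  ultimately have "prd (permute_list \<sigma> xs) \<in> T"
    using A[unfolded absorbs_def, rule_format, of "permute_list \<sigma> xs" "inv \<sigma> 0"] xs(1) by simp
  then show "y \<in> T" using y xs(1) by (simp add: prod_perm_eq_permute_list)
qed

lemma prod_sets_eq_0_if_annihilates:
  assumes AB: "annihilates A B" and \<sigma>: "\<sigma> permutes {..<n}" and n: "1 < n"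
  shows "prod_sets scale n prd \<sigma> (A # B # replicate (n - 2) UNIV) = {0}"
proof -
  have "prod_sets scale n prd \<sigma> (A # B # replicate (n - 2) UNIV) \<subseteq> {0}"
    unfolding prod_sets_def
  proof (rule span_minimal[OF _ subspace_single_0], rule subsetI)
    fix y assume "y \<in> {prod_perm n prd \<sigma> xs |xs. length xs = n \<and> (\<forall>r<n. xs ! r \<in> (A # B # replicate (n - 2) UNIV) ! r)}"
    then obtain xs where y: "y = prod_perm n prd \<sigma> xs"
      and xs: "length xs = n" "\<forall>r<n. xs ! r \<in> (A # B # replicate (n - 2) UNIV) ! r" by blast
    have inv: "inv \<sigma> r < n" "permute_list \<sigma> xs ! inv \<sigma> r = xs ! r" if "r < n" for r
      using permutes_in_image[OF permutes_inv[OF \<sigma>]] that xs(1) \<sigma>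
      by (auto simp: permute_list_nth permutes_inverses(1))
    have "xs ! 0 \<in> A" "xs ! 1 \<in> B"
      using xs(2)[rule_format, of 0] xs(2)[rule_format, of 1] n by simp_all
    moreover have "inv \<sigma> 0 \<noteq> inv \<sigma> 1" by (metis \<sigma> permutes_inverses(1) zero_neq_one)
    ultimately have "prd (permute_list \<sigma> xs) = 0"
      using AB[unfolded annihilates_def, rule_format, of "permute_list \<sigma> xs" "inv \<sigma> 0" "inv \<sigma> 1"]
        xs(1) n inv[of 0] inv[of 1] by simp
    then show "y \<in> {0}" using y xs(1) by (simp add: prod_perm_eq_permute_list)
  qed
  then show ?thesis using span_zero unfolding prod_sets_def by blast
qed

end

section \<open>Graded vector spaces\<close>

locale graded_space =
  fixes scale :: "'f::field \<Rightarrow> 'v::ab_group_add \<Rightarrow> 'v" and Lg :: "'g \<Rightarrow> 'v set"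
  assumes graded_vs: "graded_vs scale Lg"
begin

sublocale vector_space scale
  using graded_vs by (simp add: graded_vs_def)

lemma subspace_Lg: "subspace (Lg g)"
  using graded_vs by (simp add: graded_vs_def)

definition component :: "'v \<Rightarrow> 'g \<Rightarrow> 'v" where
  "component x = (THE c. hom_decomp Lg x c)"

lemma ex1_hom_decomp: "\<exists>!c. hom_decomp Lg x c"
  using graded_vs unfolding graded_vs_def hom_decomp_def by blast

lemma hom_decomp_component: "hom_decomp Lg x (component x)"
  unfolding component_def using ex1_hom_decomp by (rule theI')

lemma component_eqI: "hom_decomp Lg x c \<Longrightarrow> component x = c"
  unfolding component_def using ex1_hom_decomp by (rule the1_equality)

lemma hom_decompI:
  assumes "\<And>g. c g \<in> Lg g" "finite F" "{g. c g \<noteq> 0} \<subseteq> F" "x = sum c F"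
  shows "hom_decomp Lg x c"
proof -
  have "sum c F = sum c {g. c g \<noteq> 0}"
    using assms(2,3) by (intro sum.mono_neutral_right) auto
  then show ?thesis using assms finite_subset by (auto simp: hom_decomp_def)
qed

lemma component_add: "component (x + y) = (\<lambda>g. component x g + component y g)"
proof (rule component_eqI, rule hom_decompI)
  let ?F = "{g. component x g \<noteq> 0} \<union> {g. component y g \<noteq> 0}"
  have fin: "finite ?F" and x: "hom_decomp Lg x (component x)" and y: "hom_decomp Lg y (component y)"
    using hom_decomp_component by (auto simp: hom_decomp_def)
  show "component x g + component y g \<in> Lg g" for g
    using x y subspace_add[OF subspace_Lg] by (simp add: hom_decomp_def)
  show "finite ?F" "{g. component x g + component y g \<noteq> 0} \<subseteq> ?F" using fin by auto
  have "sum (component x) {g. component x g \<noteq> 0} = sum (component x) ?F"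
    "sum (component y) {g. component y g \<noteq> 0} = sum (component y) ?F"
    using fin by (auto intro: sum.mono_neutral_left)
  then have "x = sum (component x) ?F" "y = sum (component y) ?F"
    using x y by (simp_all add: hom_decomp_def)
  then show "x + y = (\<Sum>g\<in>?F. component x g + component y g)" by (simp add: sum.distrib)
qed

lemma component_scale: "component (scale a x) = (\<lambda>g. scale a (component x g))"
proof (rule component_eqI, rule hom_decompI)
  have x: "hom_decomp Lg x (component x)" by (rule hom_decomp_component)
  show "scale a (component x g) \<in> Lg g" for g
    using x subspace_scale[OF subspace_Lg] by (simp add: hom_decomp_def)
  show "finite {g. component x g \<noteq> 0}" using x by (simp add: hom_decomp_def)
  show "{g. scale a (component x g) \<noteq> 0} \<subseteq> {g. component x g \<noteq> 0}" by auto
  show "scale a x = (\<Sum>g\<in>{g. component x g \<noteq> 0}. scale a (component x g))"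
    using x by (metis hom_decomp_def scale_sum_right)
qed

lemma component_homogeneous: "x \<in> Lg h \<Longrightarrow> component x = (\<lambda>g. if g = h then x else 0)"
  by (rule component_eqI, rule hom_decompI[where F = "{h}"]) (auto simp: subspace_0[OF subspace_Lg])

lemma component_0: "component 0 = (\<lambda>_. 0)"
  by (rule component_eqI, rule hom_decompI[where F = "{}"]) (auto simp: subspace_0[OF subspace_Lg])

lemma graded_subspace_iff:
  "graded_subspace scale Lg S \<longleftrightarrow> subspace S \<and> (\<forall>x\<in>S. \<forall>g. component x g \<in> S)"
  unfolding graded_subspace_def using hom_decomp_component component_eqI by metis

lemma span_homogeneous: "span {x. homogeneous Lg x} = UNIV"
proof -
  have "x \<in> span {x. homogeneous Lg x}" for x
  proof -
    have "x = sum (component x) {g. component x g \<noteq> 0}" and "\<forall>g. component x g \<in> Lg g"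
      using hom_decomp_component[of x] by (simp_all add: hom_decomp_def)
    then show ?thesis
      by (metis (mono_tags, lifting) homogeneous_def mem_Collect_eq span_base span_sum)
  qed
  then show ?thesis by blast
qed

lemma graded_subspace_span:
  assumes "\<And>b. b \<in> B \<Longrightarrow> homogeneous Lg b"
  shows "graded_subspace scale Lg (span B)"
proof -
  let ?T = "{x. \<forall>g. component x g \<in> span B}"
  have "B \<subseteq> ?T"
  proof
    fix b assume "b \<in> B"
    then obtain h where "b \<in> Lg h" using assms by (auto simp: homogeneous_def)
    then show "b \<in> ?T" using \<open>b \<in> B\<close> by (simp add: component_homogeneous span_base span_zero)
  qed
  moreover have "subspace ?T"
    unfolding subspace_def
    by (simp add: component_add component_scale span_add span_scale span_zero component_0)
  ultimately have "span B \<subseteq> ?T" by (rule span_minimal)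
  then show ?thesis unfolding graded_subspace_iff by auto
qed

lemma graded_subspace_Int:
  "graded_subspace scale Lg A \<Longrightarrow> graded_subspace scale Lg B \<Longrightarrow> graded_subspace scale Lg (A \<inter> B)"
  unfolding graded_subspace_iff by (auto intro: subspace_inter)

lemma graded_subspace_setsum2:
  assumes A: "graded_subspace scale Lg A" and B: "graded_subspace scale Lg B"
  shows "graded_subspace scale Lg (setsum2 A B)"
  unfolding graded_subspace_iff
proof (intro conjI ballI allI)
  show "subspace (setsum2 A B)" using A B subspace_setsum2 by (simp add: graded_subspace_iff)
  fix x g assume "x \<in> setsum2 A B"
  then obtain a b where "x = a + b" "a \<in> A" "b \<in> B" by (auto simp: setsum2_def)
  moreover then have "component a g \<in> A" "component b g \<in> B"
    using A B unfolding graded_subspace_iff by blast+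
  ultimately show "component x g \<in> setsum2 A B" by (auto simp: setsum2_def component_add)
qed

end

section \<open>Colour gLt-algebras with a quasi-multiplicative basis\<close>

locale qm_gLt_algebra =
  fixes scale :: "'f::field \<Rightarrow> 'v::ab_group_add \<Rightarrow> 'v"
    and Lg :: "'g::ab_group_add \<Rightarrow> 'v set"
    and \<epsilon> :: "'g \<Rightarrow> 'g \<Rightarrow> 'f"
    and n :: nat
    and prd :: "'v list \<Rightarrow> 'v"
    and V W :: "'v set"
    and I :: "'i set"
    and e :: "'i \<Rightarrow> 'v"
  assumes two_le_n: "2 \<le> n"
    and gLt: "color_gLt_algebra scale Lg \<epsilon> n prd"
    and qmb: "qm_basis scale Lg n prd V W I e"
begin

lemma graded_nary: "graded_nary_algebra scale Lg n prd"
  using gLt by (simp add: color_gLt_algebra_def)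

sublocale graded_space scale Lg
  using graded_nary by unfold_locales (simp add: graded_nary_algebra_def)

sublocale nary_product scale n prd
  using graded_nary
  by (intro nary_product.intro nary_product_axioms.intro vector_space_axioms)
    (simp add: graded_nary_algebra_def)

lemma prd_in_Lg: "length xs = n \<Longrightarrow> \<forall>r<n. xs ! r \<in> Lg (ds r) \<Longrightarrow> prd xs \<in> Lg (\<Sum>r<n. ds r)"
  using graded_nary unfolding graded_nary_algebra_def by blast

lemma prd_homogeneous:
  assumes len: "length xs = n" and hom: "\<forall>r<n. homogeneous Lg (xs ! r)"
  shows "homogeneous Lg (prd xs)"
proof -
  define ds where "ds r = (SOME g. xs ! r \<in> Lg g)" for r
  have "\<forall>r<n. xs ! r \<in> Lg (ds r)"
    using hom unfolding ds_def homogeneous_def by (metis someI_ex)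
  then show ?thesis using prd_in_Lg len by (auto simp: homogeneous_def)
qed

lemma gLt_lhs_in_span_rhs:
  assumes lx: "length xs = n" and ly: "length ys = n - 1" and k: "k < n"
    and hx: "\<forall>r<n. homogeneous Lg (xs ! r)" and hy: "\<forall>s<n - 1. homogeneous Lg (ys ! s)"
  shows "gLt_lhs n prd k xs ys \<in> span {gLt_rhs_term n prd i j \<sigma>1 \<sigma>2 xs ys | i j \<sigma>1 \<sigma>2.
           i < n \<and> j < n \<and> \<sigma>1 permutes {..<n} \<and> \<sigma>2 permutes {..<n - 1}}"
proof -
  define dx where "dx r = (SOME g. xs ! r \<in> Lg g)" for r
  define dy where "dy s = (SOME g. ys ! s \<in> Lg g)" for s
  have "\<forall>r<n. xs ! r \<in> Lg (dx r)" "\<forall>s<n - 1. ys ! s \<in> Lg (dy s)"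
    using hx hy unfolding dx_def dy_def homogeneous_def by (metis someI_ex)+
  moreover obtain \<alpha> where "\<forall>k<n. \<forall>xs ys dx dy.
      length xs = n \<longrightarrow> length ys = n - 1 \<longrightarrow>
      (\<forall>r<n. xs ! r \<in> Lg (dx r)) \<longrightarrow> (\<forall>s<n - 1. ys ! s \<in> Lg (dy s)) \<longrightarrow>
      gLt_lhs n prd k xs ys =
        (\<Sum>i<n. \<Sum>j<n. \<Sum>\<sigma>1\<in>{p. p permutes {..<n}}. \<Sum>\<sigma>2\<in>{p. p permutes {..<n - 1}}.
           scale (\<alpha> i j k \<sigma>1 \<sigma>2 *
                  color_factor \<epsilon> (case_sum dx dy) (gLt_lhs_labels n k) (gLt_rhs_labels n i j \<sigma>1 \<sigma>2))
                 (gLt_rhs_term n prd i j \<sigma>1 \<sigma>2 xs ys))"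
    using gLt unfolding color_gLt_algebra_def by blast
  ultimately have eq: "gLt_lhs n prd k xs ys =
        (\<Sum>i<n. \<Sum>j<n. \<Sum>\<sigma>1\<in>{p. p permutes {..<n}}. \<Sum>\<sigma>2\<in>{p. p permutes {..<n - 1}}.
           scale (\<alpha> i j k \<sigma>1 \<sigma>2 *
                  color_factor \<epsilon> (case_sum dx dy) (gLt_lhs_labels n k) (gLt_rhs_labels n i j \<sigma>1 \<sigma>2))
                 (gLt_rhs_term n prd i j \<sigma>1 \<sigma>2 xs ys))"
    using lx ly k by blast
  show ?thesis unfolding eq by (intro span_sum span_scale span_base) blast
qed

text \<open>\<open>OL\<close> and \<open>IL\<close> are the outer and the inner product of a term on the right-hand side
  of the gLt identity applied to \<open>zs\<close>, whose slot \<open>r0\<close> holds the product of \<open>xs\<close>.\<close>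
lemma prd_nested_mem_subspace:
  assumes T: "subspace T" and len: "length zs = n" and r0: "r0 < n" and z: "zs ! r0 = prd xs"
    and lx: "length xs = n" and hx: "\<forall>r<n. homogeneous Lg (xs ! r)"
    and hz: "\<forall>r<n. r \<noteq> r0 \<longrightarrow> homogeneous Lg (zs ! r)"
    and terms: "\<And>OL IL i j \<sigma>. i < n \<Longrightarrow> j < n \<Longrightarrow> \<sigma> permutes {..<n} \<Longrightarrow>
      length OL = n \<Longrightarrow> length IL = n \<Longrightarrow> OL ! i = prd IL \<Longrightarrow> IL ! j = xs ! \<sigma> i \<Longrightarrow>
      \<forall>q<n. q \<noteq> i \<longrightarrow> OL ! q = xs ! \<sigma> q \<Longrightarrow>
      \<forall>r<n. r \<noteq> r0 \<longrightarrow> (\<exists>p<n. p \<noteq> j \<and> IL ! p = zs ! r) \<Longrightarrow> prd OL \<in> T"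
  shows "prd zs \<in> T"
proof -
  define ys where "ys = take r0 zs @ drop (Suc r0) zs"
  have ly: "length ys = n - 1" using len r0 by (simp add: ys_def)
  have ys_nth: "ys ! s = zs ! (if s < r0 then s else Suc s)" if "s < n - 1" for s
    unfolding ys_def using nth_remove_nth[of r0 zs s] len r0 that by simp
  have "prd zs = gLt_lhs n prd r0 xs ys"
    unfolding gLt_lhs_def ys_def using id_take_nth_drop[of r0 zs] len r0 z by simp
  also have "\<dots> \<in> span {gLt_rhs_term n prd i j \<sigma>1 \<sigma>2 xs ys | i j \<sigma>1 \<sigma>2.
           i < n \<and> j < n \<and> \<sigma>1 permutes {..<n} \<and> \<sigma>2 permutes {..<n - 1}}"
    using gLt_lhs_in_span_rhs[OF lx ly r0 hx] hz ys_nth by simp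
  also have "\<dots> \<subseteq> T"
  proof (rule span_minimal[OF _ T], clarify)
    fix i j \<sigma>1 \<sigma>2 assume i: "i < n" and j: "j < n"
      and \<sigma>1: "\<sigma>1 permutes {..<n}" and \<sigma>2: "\<sigma>2 permutes {..<n - 1}"
    define IL where "IL = map (\<lambda>t. ys ! \<sigma>2 t) [0..<j] @ [xs ! \<sigma>1 i] @ map (\<lambda>t. ys ! \<sigma>2 t) [j..<n - 1]"
    define OL where "OL = map (\<lambda>t. xs ! \<sigma>1 t) [0..<i] @ [prd IL] @ map (\<lambda>t. xs ! \<sigma>1 t) [Suc i..<n]"
    have "\<exists>p<n. p \<noteq> j \<and> IL ! p = zs ! r" if r: "r < n" "r \<noteq> r0" for r
    proof -
      define s where "s = (if r < r0 then r else r - 1)"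
      have s: "s < n - 1" "ys ! s = zs ! r" using r r0 ys_nth[of s] by (auto simp: s_def)
      define t where "t = inv \<sigma>2 s"
      have t: "t < n - 1" "\<sigma>2 t = s"
        using permutes_in_image[OF permutes_inv[OF \<sigma>2]] permutes_inverses(1)[OF \<sigma>2] s(1)
        by (auto simp: t_def)
      show ?thesis
        using nth_map_upt_insert[OF j t(1), of "\<lambda>t. ys ! \<sigma>2 t" "xs ! \<sigma>1 i"] t s j
        by (intro exI[of _ "if t < j then t else Suc t"]) (auto simp: IL_def)
    qed
    moreover have "OL ! q = xs ! \<sigma>1 q" if "q < n" "q \<noteq> i" for q
      using nth_map_upt_replace[OF i that(1)] that(2) by (simp add: OL_def)
    ultimately have "prd OL \<in> T"
      using terms[OF i j \<sigma>1, of OL IL] i j by (simp add: OL_def IL_def nth_append)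
    then show "gLt_rhs_term n prd i j \<sigma>1 \<sigma>2 xs ys \<in> T"
      by (simp add: gLt_rhs_term_def OL_def IL_def)
  qed
  finally show ?thesis .
qed

lemma graded_V: "graded_subspace scale Lg V"
  and graded_W: "graded_subspace scale Lg W"
  and V_plus_W: "direct_sum_eq UNIV V W"
  and inj_e: "inj_on e I"
  and independent_e: "\<not> dependent (e ` I)"
  and span_e: "span (e ` I) = W"
  and homogeneous_e: "i \<in> I \<Longrightarrow> homogeneous Lg (e i)"
  using qmb by (auto simp: qm_basis_def)

lemma basis_prd_in_line_or_V:
  "length ks = n \<Longrightarrow> set ks \<subseteq> I \<Longrightarrow> (\<exists>j\<in>I. prd (map e ks) \<in> line scale (e j)) \<or> prd (map e ks) \<in> V"
  using qmb unfolding qm_basis_def by blast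

lemma basis_V_prd_in_line:
  "0 < k \<Longrightarrow> k < n \<Longrightarrow> length ks = k \<Longrightarrow> set ks \<subseteq> I \<Longrightarrow> \<sigma> permutes {..<n} \<Longrightarrow>
    \<exists>j\<in>I. prod_sets scale n prd \<sigma> (map (\<lambda>i. {e i}) ks @ replicate (n - k) V) \<subseteq> line scale (e j)"
  using qmb unfolding qm_basis_def by blast

lemma V_prd_in_line_or_V:
  "(\<exists>j\<in>I. prod_sets scale n prd id (replicate n V) \<subseteq> line scale (e j)) \<or>
    prod_sets scale n prd id (replicate n V) \<subseteq> V"
  using qmb unfolding qm_basis_def by blast

lemma subspace_V: "subspace V"
  using graded_V by (simp add: graded_subspace_def)

lemma subspace_W: "subspace W"
  using graded_W by (simp add: graded_subspace_def)

lemma line_eq_span: "line scale x = span {x}"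
  by (simp add: line_def span_singleton)

lemma e_neq_0: "i \<in> I \<Longrightarrow> e i \<noteq> 0"
  using independent_e dependent_zero by force

lemma line_Int_V: "i \<in> I \<Longrightarrow> line scale (e i) \<inter> V = {0}"
proof -
  assume i: "i \<in> I"
  have "line scale (e i) \<subseteq> W"
    unfolding line_eq_span using i span_e span_mono[of "{e i}" "e ` I"] by auto
  then show ?thesis using V_plus_W subspace_V span_zero by (auto simp: direct_sum_eq_def line_eq_span)
qed

lemma line_Int_line:
  assumes i: "i \<in> I" and j: "j \<in> I" "i \<noteq> j" and x: "x \<in> line scale (e i)" "x \<in> line scale (e j)"
  shows "x = 0"
proof (rule ccontr)
  assume "x \<noteq> 0"
  moreover obtain a b where "x = scale a (e i)" "x = scale b (e j)" using x unfolding line_def by blast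
  ultimately have "e i = scale (inverse a * b) (e j)" by (auto simp: scale_scale[symmetric])
  then have "e i \<in> span (e ` I - {e i})"
    using i j inj_e by (metis (no_types, lifting) image_eqI inj_on_contraD insertE insert_Diff span_base span_scale)
  then show False using independent_e i by (auto simp: dependent_def)
qed

section \<open>Index maps\<close>

abbreviation "slot \<equiv> u_set V e"
abbreviation "prod_idx \<sigma> js \<equiv> prod_sets scale n prd \<sigma> (map slot js)"
abbreviation "amap \<equiv> a_map scale n prd V I e"

lemma prod_idx_permute_list:
  "length js = n \<Longrightarrow> \<tau> permutes {..<n} \<Longrightarrow> \<sigma> permutes {..<n} \<Longrightarrow>
    prod_idx \<sigma> (permute_list \<tau> js) = prod_idx (\<tau> \<circ> \<sigma>) js"
  using prod_sets_permute_list[of "map slot js" n \<tau> \<sigma>] by (simp add: permute_list_map)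

lemma amap_permute_list:
  "length js = n \<Longrightarrow> \<tau> permutes {..<n} \<Longrightarrow> \<sigma> permutes {..<n} \<Longrightarrow>
    amap \<sigma> (permute_list \<tau> js) = amap (\<tau> \<circ> \<sigma>) js"
  unfolding a_map_def by (simp only: prod_idx_permute_list)

lemma amap_subset: "amap \<sigma> js \<subseteq> Iv I"
  unfolding a_map_def Iv_def Let_def by auto

lemma Some_in_amapD: "Some j \<in> amap \<sigma> js \<Longrightarrow> j \<in> I \<and> prod_idx \<sigma> js \<noteq> {0} \<and> prod_idx \<sigma> js \<subseteq> line scale (e j)"
  unfolding a_map_def Let_def by (auto split: if_splits)

lemma None_in_amapD: "None \<in> amap \<sigma> js \<Longrightarrow> prod_idx \<sigma> js \<noteq> {0} \<and> prod_idx \<sigma> js \<subseteq> V"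
  unfolding a_map_def Let_def by (auto split: if_splits)

lemma prod_idx_nonzero: "prod_idx \<sigma> js \<noteq> {0} \<Longrightarrow> \<exists>x\<in>prod_idx \<sigma> js. x \<noteq> 0"
  using span_zero by (auto simp: prod_sets_def)

lemma amap_eq_None:
  assumes nz: "prod_idx \<sigma> js \<noteq> {0}" and V: "prod_idx \<sigma> js \<subseteq> V"
  shows "amap \<sigma> js = {None}"
proof -
  obtain x where "x \<in> prod_idx \<sigma> js" "x \<noteq> 0" using prod_idx_nonzero[OF nz] by blast
  then have "\<not> prod_idx \<sigma> js \<subseteq> line scale (e r)" if "r \<in> I" for r
    using line_Int_V[OF that] V by blast
  then show ?thesis using nz V unfolding a_map_def by auto
qed

lemma amap_eq_Some:
  assumes j: "j \<in> I" and nz: "prod_idx \<sigma> js \<noteq> {0}" and line: "prod_idx \<sigma> js \<subseteq> line scale (e j)"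
  shows "amap \<sigma> js = {Some j}"
proof -
  obtain x where x: "x \<in> prod_idx \<sigma> js" "x \<noteq> 0" using prod_idx_nonzero[OF nz] by blast
  then have "\<not> prod_idx \<sigma> js \<subseteq> V" using line_Int_V[OF j] line by blast
  moreover have "\<not> prod_idx \<sigma> js \<subseteq> line scale (e r)" if "r \<in> I" "r \<noteq> j" for r
    using line_Int_line[OF that(1) j that(2)] x line by blast
  ultimately show ?thesis using nz line j unfolding a_map_def by auto
qed

lemma prod_idx_basis:
  assumes ks: "length ks = n" "set ks \<subseteq> I"
  shows "prod_idx id (map Some ks) \<subseteq> V \<or> (\<exists>j\<in>I. prod_idx id (map Some ks) \<subseteq> line scale (e j))"
proof -
  have "map slot (map Some ks) = map (\<lambda>x. {x}) (map e ks)" by (simp add: u_set_def)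
  then have P: "prod_idx id (map Some ks) = span {prd (map e ks)}"
    using prod_sets_singletons[of "map e ks"] ks(1) by (simp only: length_map)
  from basis_prd_in_line_or_V[OF ks] show ?thesis
    unfolding P line_eq_span using subspace_V span_minimal[of "{prd (map e ks)}"] by blast
qed

lemma prod_idx_V:
  "prod_idx id (replicate n None) \<subseteq> V \<or> (\<exists>j\<in>I. prod_idx id (replicate n None) \<subseteq> line scale (e j))"
  using V_prd_in_line_or_V by (auto simp: u_set_def)

lemma prod_idx_mixed:
  assumes len: "length js = n" and js: "set js \<subseteq> Iv I" "None \<in> set js" "\<exists>x\<in>set js. x \<noteq> None"
  shows "\<exists>j\<in>I. prod_idx id js \<subseteq> line scale (e j)"
proof -
  define F where "F = filter (\<lambda>x. x \<noteq> None) js"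
  define N where "N = filter (\<lambda>x. x = None) js"
  have "mset js = mset (F @ N)" unfolding F_def N_def by (induction js) auto
  then obtain \<tau> where \<tau>: "\<tau> permutes {..<length (F @ N)}" "permute_list \<tau> (F @ N) = js"
    using mset_eq_permutation by blast
  have FN: "length (F @ N) = n" using mset_eq_length[OF \<open>mset js = mset (F @ N)\<close>] len by simp
  define ks where "ks = map the F"
  have "0 < length F" "0 < length N" using js unfolding F_def N_def by (auto simp: filter_empty_conv)
  then have k: "0 < length ks" "length ks < n" using FN by (auto simp: ks_def)
  have "set ks \<subseteq> I" using js(1) by (auto simp: ks_def F_def Iv_def)
  moreover have "map slot (F @ N) = map (\<lambda>i. {e i}) ks @ replicate (n - length ks) V"
  proof -
    have "map slot F = map (\<lambda>i. {e i}) ks" unfolding ks_def F_def by (auto simp: u_set_def)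
    moreover have "map slot N = replicate (length N) V" unfolding N_def by (induction js) (auto simp: u_set_def)
    ultimately show ?thesis using FN by (simp add: ks_def)
  qed
  moreover have "prod_idx id js = prod_sets scale n prd \<tau> (map slot (F @ N))"
    using prod_idx_permute_list[of "F @ N" \<tau> id] FN \<tau> by simp
  ultimately show ?thesis using basis_V_prd_in_line[OF k _ _ \<tau>(1)[unfolded FN]] by auto
qed

lemma prod_idx_V_or_line:
  assumes len: "length js = n" and js: "set js \<subseteq> Iv I"
  shows "prod_idx id js \<subseteq> V \<or> (\<exists>j\<in>I. prod_idx id js \<subseteq> line scale (e j))"
proof (cases "None \<in> set js")
  case True
  show ?thesis
  proof (cases "\<exists>x\<in>set js. x \<noteq> None")
    case True
    then show ?thesis using prod_idx_mixed[OF len js \<open>None \<in> set js\<close>] by blast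
  next
    case False
    then have "js = replicate n None" using replicate_length_same[of js None] len by auto
    then show ?thesis using prod_idx_V by simp
  qed
next
  case False
  then have js_eq: "map Some (map the js) = js" by (induction js) auto
  have "set (map the js) \<subseteq> I" using js False by (auto simp: Iv_def)
  then show ?thesis using prod_idx_basis[of "map the js"] len unfolding js_eq by simp
qed

lemma amap_singleton:
  assumes len: "length js = n" and js: "set js \<subseteq> Iv I" and \<sigma>: "\<sigma> permutes {..<n}"
    and nz: "prod_idx \<sigma> js \<noteq> {0}"
  shows "\<exists>t. amap \<sigma> js = {t}"
proof -
  have "prod_idx \<sigma> js = prod_idx id (permute_list \<sigma> js)"
    using prod_idx_permute_list[OF len \<sigma> permutes_id] by simp
  then show ?thesis
    using prod_idx_V_or_line[of "permute_list \<sigma> js"] len js \<sigma> amap_eq_None[OF nz] amap_eq_Some[OF _ nz]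
    by auto
qed

lemma amap_to_front:
  assumes len: "length js = n" and \<sigma>: "\<sigma> permutes {..<n}" and r: "r < n" "r' < n" "r \<noteq> r'"
  obtains \<sigma>' rest where "\<sigma>' permutes {..<n}" "length rest = n - 2" "set rest \<subseteq> set js"
    "amap \<sigma>' (js ! r # js ! r' # rest) = amap \<sigma> js"
proof -
  obtain \<tau> where \<tau>: "\<tau> permutes {..<n}"
    and front: "permute_list \<tau> js = js ! r # js ! r' # drop 2 (permute_list \<tau> js)"
    using permute_list_to_front[of r js r'] len r by auto
  define rest where "rest = drop 2 (permute_list \<tau> js)"
  have \<sigma>': "inv \<tau> \<circ> \<sigma> permutes {..<n}" using \<tau> \<sigma> by (simp add: permutes_compose permutes_inv)
  have "amap (inv \<tau> \<circ> \<sigma>) (permute_list \<tau> js) = amap \<sigma> js"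
    using amap_permute_list[OF len \<tau> \<sigma>'] permutes_inv_o(1)[OF \<tau>] by (simp add: o_assoc)
  moreover have "length rest = n - 2" using len by (simp add: rest_def)
  moreover have "set rest \<subseteq> set js"
    using set_drop_subset[of 2 "permute_list \<tau> js"] \<tau> len by (simp add: rest_def)
  ultimately show ?thesis using that[OF \<sigma>'] front unfolding rest_def[symmetric] by simp
qed

section \<open>Connections\<close>

abbreviation "mu \<equiv> mu_map scale n prd V I e"
abbreviation "phi \<equiv> phi_map scale n prd V I e"
abbreviation "conn \<equiv> connected_idx scale n prd V I e"
abbreviation "cls \<equiv> conn_class scale n prd V I e"

definition adjacent :: "'i \<Rightarrow> 'i \<Rightarrow> bool" where
  "adjacent a b \<longleftrightarrow> a \<in> I \<and> b \<in> I \<and> (\<exists>bt X. admissible_X n I X \<and> Some b \<in> mu (bt, Some a) X)"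

lemma Some_in_Iv [simp]: "Some a \<in> Iv I \<longleftrightarrow> a \<in> I"
  by (auto simp: Iv_def)

lemma admissible_X_Cons:
  "length xs = n - 2 \<Longrightarrow> set (x # xs) \<subseteq> Iv I \<Longrightarrow> admissible_X n I (bt, x # xs)"
  using two_le_n by (auto simp: admissible_X_def)

lemma adjacent_slot_to_value:
  assumes len: "length js = n" and js: "set js \<subseteq> Iv I" and \<sigma>: "\<sigma> permutes {..<n}"
    and val: "amap \<sigma> js = {Some b}" and r: "r < n" "js ! r = Some a"
  shows "adjacent a b"
proof -
  define r' where "r' = (if r = 0 then 1 else 0 :: nat)"
  have r': "r' < n" "r \<noteq> r'" using two_le_n by (auto simp: r'_def)
  obtain \<sigma>' rest where \<sigma>': "\<sigma>' permutes {..<n}" "length rest = n - 2" "set rest \<subseteq> set js"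
    and front: "amap \<sigma>' (js ! r # js ! r' # rest) = amap \<sigma> js"
    using amap_to_front[OF len \<sigma> r(1) r'] by blast
  then have "Some b \<in> mu (False, Some a) (False, js ! r' # rest)"
    using val r(2) unfolding mu_map_def by auto
  moreover have "admissible_X n I (False, js ! r' # rest)"
    by (intro admissible_X_Cons) (use \<sigma>' js len r' nth_mem in auto)
  moreover have "a \<in> I" using js r len nth_mem by fastforce
  moreover have "b \<in> I" using val Some_in_amapD[of b \<sigma> js] by simp
  ultimately show ?thesis unfolding adjacent_def by blast
qed

lemma adjacent_value_to_slot:
  assumes len: "length js = n" and js: "set js \<subseteq> Iv I" and \<sigma>: "\<sigma> permutes {..<n}"
    and val: "amap \<sigma> js = {Some a}" and r: "r < n" "js ! r = Some b"
  shows "adjacent a b"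
proof -
  define r' where "r' = (if r = 0 then 1 else 0 :: nat)"
  have r': "r' < n" "r \<noteq> r'" using two_le_n by (auto simp: r'_def)
  obtain \<sigma>' rest where \<sigma>': "\<sigma>' permutes {..<n}" "length rest = n - 2" "set rest \<subseteq> set js"
    and front: "amap \<sigma>' (js ! r # js ! r' # rest) = amap \<sigma> js"
    using amap_to_front[OF len \<sigma> r(1) r'] by blast
  have "b \<in> I" using js r len nth_mem by fastforce
  moreover have "a \<in> I" using val Some_in_amapD[of a \<sigma> js] by simp
  moreover have "Some b \<in> mu (False, Some a) (True, js ! r' # rest)"
    using front val r(2) \<sigma>'(1) \<open>b \<in> I\<close> unfolding mu_map_def b_map_def by auto
  moreover have "admissible_X n I (True, js ! r' # rest)"
    by (intro admissible_X_Cons) (use \<sigma>' js len r' nth_mem in auto)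
  ultimately show ?thesis unfolding adjacent_def by blast
qed

lemma adjacent_two_slots:
  assumes len: "length js = n" and js: "set js \<subseteq> Iv I" and \<sigma>: "\<sigma> permutes {..<n}"
    and val: "amap \<sigma> js = {t}" and r: "r < n" "r' < n" "r \<noteq> r'" "js ! r = Some a" "js ! r' = Some b"
  shows "adjacent a b"
proof -
  obtain \<sigma>' rest where \<sigma>': "\<sigma>' permutes {..<n}" "length rest = n - 2" "set rest \<subseteq> set js"
    and front: "amap \<sigma>' (js ! r' # js ! r # rest) = amap \<sigma> js"
    using amap_to_front[OF len \<sigma> r(2,1)] r(3) by metis
  have "a \<in> I" "b \<in> I" using js r len nth_mem by fastforce+
  moreover have "Some b \<in> b_map scale n prd V I e \<sigma>' ((t # rest) ! 0) (Some a # take 0 (t # rest) @ drop 1 (t # rest))"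
    using front val r(4,5) \<open>b \<in> I\<close> unfolding b_map_def by simp
  then have "Some b \<in> mu (True, Some a) (False, t # rest)"
    unfolding mu_map_def prod.case bool.case UN_iff
    using \<sigma>'(1) two_le_n by (intro bexI[of _ 0]) auto
  moreover have "admissible_X n I (False, t # rest)"
    by (intro admissible_X_Cons) (use \<sigma>' js amap_subset[of \<sigma> js] val in auto)
  ultimately show ?thesis unfolding adjacent_def using \<open>a \<in> I\<close> \<open>b \<in> I\<close> by blast
qed

lemma adjacent_sym:
  assumes "adjacent a b"
  shows "adjacent b a"
proof -
  obtain bt bX js where X: "length js = n - 1" "set js \<subseteq> Iv I" "Some b \<in> mu (bt, Some a) (bX, js)"
    and ab: "a \<in> I" "b \<in> I"
    using assms by (auto simp: adjacent_def admissible_X_def)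
  have len: "length (x # js) = n" "set (x # js) \<subseteq> Iv I" if "x \<in> Iv I" for x
    using X two_le_n that by auto
  consider (unbarred) \<sigma> where "\<sigma> permutes {..<n}" "Some b \<in> amap \<sigma> (Some a # js)"
    | (barred_tuple) \<sigma> where "\<sigma> permutes {..<n}" "amap \<sigma> (Some b # js) = {Some a}"
    | (barred_index) k \<sigma> where "k < n - 1" "\<sigma> permutes {..<n}"
        "amap \<sigma> (Some b # Some a # take k js @ drop (Suc k) js) = {js ! k}"
    using X(3) unfolding mu_map_def b_map_def by (cases bt; cases bX) auto
  then show ?thesis
  proof cases
    case unbarred
    then have "amap \<sigma> (Some a # js) = {Some b}" using Some_in_amapD amap_eq_Some by metis
    then show ?thesis using adjacent_value_to_slot[OF len[of "Some a"] unbarred(1), of b 0] ab two_le_n by simp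
  next
    case barred_tuple
    then show ?thesis using adjacent_slot_to_value[OF len[of "Some b"] barred_tuple(1), of a 0] ab two_le_n by simp
  next
    case barred_index
    have "length (Some b # Some a # take k js @ drop (Suc k) js) = n"
      "set (Some b # Some a # take k js @ drop (Suc k) js) \<subseteq> Iv I"
      using X barred_index(1) two_le_n ab by (auto dest: in_set_takeD in_set_dropD)
    then show ?thesis using adjacent_two_slots[OF _ _ barred_index(2,3), of 0 1] two_le_n by simp
  qed
qed

lemma mu_subset: "mu J X \<subseteq> Iv I"
  using amap_subset unfolding mu_map_def b_map_def by (auto split: prod.splits bool.splits)

lemma mem_phiD: "p \<in> phi S X \<Longrightarrow> \<exists>q\<in>S. \<exists>d. Some d \<in> mu q X \<and> snd p = Some d"
  unfolding phi_map_def Let_def by (auto split: if_splits)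

lemma foldl_phi_barred:
  assumes "Xs \<noteq> []" "(False, k) \<in> foldl phi S Xs"
  shows "(True, k) \<in> foldl phi S Xs"
proof -
  obtain Ys X where "Xs = Ys @ [X]" using assms(1) by (metis rev_exhaust)
  then show ?thesis using assms(2) unfolding phi_map_def Let_def by (auto split: if_splits)
qed

lemma connected_adjacent:
  assumes c: "conn a b" and s: "adjacent b c"
  shows "conn a c"
proof -
  obtain bt X where X: "admissible_X n I X" "Some c \<in> mu (bt, Some b) X" and "c \<in> I"
    using s unfolding adjacent_def by blast
  have step: "(False, Some c) \<in> phi S X" if "(bt, Some b) \<in> S" for S
    using that X(2) unfolding phi_map_def Let_def by auto
  have "a \<in> I" using c by (simp add: connected_idx_def)
  consider "a = b" | Xs it where "Xs \<noteq> []" "\<forall>X\<in>set Xs. admissible_X n I X"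
    "it \<in> {(False, Some a), (True, Some a)}"
    "\<forall>m. 0 < m \<longrightarrow> m < length Xs \<longrightarrow> foldl phi {it} (take m Xs) \<noteq> {}"
    "(False, Some b) \<in> foldl phi {it} Xs"
    using c unfolding connected_idx_def by blast
  then show ?thesis
  proof cases
    case 1
    then have "(False, Some c) \<in> foldl phi {(bt, Some a)} [X]" using step by simp
    moreover have "(bt, Some a) \<in> {(False, Some a), (True, Some a)}" by (cases bt) auto
    ultimately show ?thesis
      unfolding connected_idx_def using \<open>a \<in> I\<close> \<open>c \<in> I\<close> X(1) by (intro conjI disjI2 exI[of _ "[X]"]) auto
  next
    case 2
    then have "(bt, Some b) \<in> foldl phi {it} Xs" using foldl_phi_barred by (cases bt) auto
    then have "(False, Some c) \<in> foldl phi {it} (Xs @ [X])" using step by simp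
    moreover have "foldl phi {it} (take m (Xs @ [X])) \<noteq> {}" if "0 < m" "m < length (Xs @ [X])" for m
      using 2 that by (cases "m < length Xs") (auto simp: less_Suc_eq)
    ultimately show ?thesis
      unfolding connected_idx_def using 2 \<open>a \<in> I\<close> \<open>c \<in> I\<close> X(1)
      by (intro conjI disjI2 exI[of _ "Xs @ [X]"] exI[of _ it]) auto
  qed
qed

lemma connected_if_rtrancl: "(a, b) \<in> {(x, y). adjacent x y}\<^sup>* \<Longrightarrow> a \<in> I \<Longrightarrow> conn a b"
proof (induction rule: rtrancl_induct)
  case base
  then show ?case by (simp add: connected_idx_def)
next
  case (step b c)
  then show ?case using connected_adjacent by blast
qed

lemma rtrancl_if_connected:
  assumes c: "conn a b"
  shows "(a, b) \<in> {(x, y). adjacent x y}\<^sup>*"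
proof (cases "a = b")
  case False
  then obtain Xs it where Xs: "\<forall>X\<in>set Xs. admissible_X n I X" "it \<in> {(False, Some a), (True, Some a)}"
    "(False, Some b) \<in> foldl phi {it} Xs" and "a \<in> I"
    using c unfolding connected_idx_def by blast
  have "\<forall>p \<in> foldl phi {it} Xs. \<exists>c. snd p = Some c \<and> c \<in> I \<and> (a, c) \<in> {(x, y). adjacent x y}\<^sup>*"
    using Xs(1)
  proof (induction Xs rule: rev_induct)
    case Nil
    then show ?case using Xs(2) \<open>a \<in> I\<close> by auto
  next
    case (snoc X Ys)
    show ?case
    proof
      fix p assume "p \<in> foldl phi {it} (Ys @ [X])"
      then obtain q d where q: "q \<in> foldl phi {it} Ys" "Some d \<in> mu q X" "snd p = Some d"
        using mem_phiD[of p "foldl phi {it} Ys" X] by auto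
      obtain c where c: "snd q = Some c" "c \<in> I" "(a, c) \<in> {(x, y). adjacent x y}\<^sup>*"
        using snoc q(1) by auto
      have "d \<in> I" using mu_subset[of q X] q(2) by auto
      moreover have "Some d \<in> mu (fst q, Some c) X" using q(2) c(1) by (cases q) simp
      moreover have "admissible_X n I X" using snoc.prems by simp
      ultimately have "adjacent c d" using c(2) unfolding adjacent_def by blast
      then show "\<exists>c. snd p = Some c \<and> c \<in> I \<and> (a, c) \<in> {(x, y). adjacent x y}\<^sup>*"
        using c(3) q(3) \<open>d \<in> I\<close> by (auto intro: rtrancl_into_rtrancl)
    qed
  qed
  from this[rule_format, OF Xs(3)] show ?thesis by auto
qed simp

lemma connected_iff: "conn a b \<longleftrightarrow> a \<in> I \<and> b \<in> I \<and> (a, b) \<in> {(x, y). adjacent x y}\<^sup>*"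
proof
  assume c: "conn a b"
  then have "a \<in> I" "b \<in> I" by (simp_all add: connected_idx_def)
  then show "a \<in> I \<and> b \<in> I \<and> (a, b) \<in> {(x, y). adjacent x y}\<^sup>*" using rtrancl_if_connected[OF c] by simp
qed (use connected_if_rtrancl in blast)

lemma connected_sym: "conn a b \<Longrightarrow> conn b a"
proof -
  have "sym ({(x, y). adjacent x y}\<^sup>*)"
    by (rule sym_rtrancl) (auto simp: sym_def intro: adjacent_sym)
  then show "conn a b \<Longrightarrow> conn b a" unfolding connected_iff sym_def by blast
qed

lemma connected_trans: "conn a b \<Longrightarrow> conn b c \<Longrightarrow> conn a c"
  unfolding connected_iff by (meson rtrancl_trans)

lemma conn_class_subset: "cls i \<subseteq> I"
  using connected_iff by (auto simp: conn_class_def)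

lemma mem_conn_class_self: "i \<in> I \<Longrightarrow> i \<in> cls i"
  using connected_iff by (simp add: conn_class_def)

lemma conn_class_adjacent: "a \<in> cls i \<Longrightarrow> adjacent a b \<Longrightarrow> b \<in> cls i"
  unfolding conn_class_def using connected_adjacent by blast

lemma not_connected_if_conn_class_neq:
  assumes c: "c \<in> cls i" and d: "d \<in> cls h" and ih: "cls i \<noteq> cls h"
  shows "\<not> conn c d"
proof
  assume "conn c d"
  moreover have "conn i c" "conn h d" using c d by (simp_all add: conn_class_def)
  ultimately have "conn h i" by (meson connected_sym connected_trans)
  then have "conn i x \<longleftrightarrow> conn h x" for x by (meson connected_sym connected_trans)
  then show False using ih by (simp add: conn_class_def)
qed

section \<open>The ideals \<open>J[i]\<close>\<close>

abbreviation "Vc \<equiv> V_class scale n prd V I e"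
abbreviation "Wc \<equiv> W_class scale n prd V I e"
abbreviation "Jc \<equiv> J_class scale n prd V I e"

definition basis_products :: "'i set \<Rightarrow> 'v set" where
  "basis_products C = {prd (map e ks) | ks. length ks = n \<and> set ks \<subseteq> C}"

definition generators :: "'i set \<Rightarrow> 'v set" where
  "generators C = basis_products C \<union> e ` C"

lemma basis_products_mono: "C \<subseteq> D \<Longrightarrow> basis_products C \<subseteq> basis_products D"
  unfolding basis_products_def by blast

lemma V_class_eq: "Vc i = span (basis_products (cls i)) \<inter> V"
  by (simp add: V_class_def basis_products_def)

lemma W_class_eq: "Wc i = span (e ` cls i)"
  by (simp add: W_class_def)

lemma subspace_V_class: "subspace (Vc i)"
  unfolding V_class_eq using subspace_V by (simp add: subspace_inter)

lemma subspace_J_class: "subspace (Jc i)"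
  unfolding J_class_def W_class_eq using subspace_V_class by (simp add: subspace_setsum2)

lemma V_class_subset_J_class: "Vc i \<subseteq> Jc i"
  unfolding J_class_def setsum2_def W_class_eq using span_zero by force

lemma W_class_subset_J_class: "Wc i \<subseteq> Jc i"
  unfolding J_class_def setsum2_def using subspace_V_class subspace_0 by force

lemma J_class_subset_span: "Jc i \<subseteq> span (generators (cls i))"
proof -
  have "Vc i \<subseteq> span (generators (cls i))" "Wc i \<subseteq> span (generators (cls i))"
    unfolding V_class_eq W_class_eq generators_def by (auto intro: span_mono[THEN subsetD])
  then show ?thesis unfolding J_class_def setsum2_def by (auto intro: span_add)
qed

lemma basis_products_homogeneous:
  assumes "C \<subseteq> I" "x \<in> basis_products C"
  shows "homogeneous Lg x"
proof -
  obtain ks where x: "x = prd (map e ks)" and ks: "length ks = n" "set ks \<subseteq> C"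
    using assms(2) by (auto simp: basis_products_def)
  have "\<forall>r<n. homogeneous Lg (map e ks ! r)" using ks assms(1) homogeneous_e nth_mem by force
  then show ?thesis unfolding x using prd_homogeneous ks(1) by simp
qed

lemma generators_homogeneous: "C \<subseteq> I \<Longrightarrow> x \<in> generators C \<Longrightarrow> homogeneous Lg x"
  unfolding generators_def using basis_products_homogeneous homogeneous_e by blast

lemma span_V_basis: "span (V \<union> e ` I) = UNIV"
proof -
  have "x \<in> span (V \<union> e ` I)" for x
  proof -
    have "x \<in> setsum2 V W" using V_plus_W by (simp add: direct_sum_eq_def)
    then obtain v w where "x = v + w" "v \<in> V" "w \<in> W" by (auto simp: setsum2_def)
    moreover have "W \<subseteq> span (V \<union> e ` I)" unfolding span_e[symmetric] by (rule span_mono) blast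
    ultimately show ?thesis by (auto intro: span_add span_base)
  qed
  then show ?thesis by blast
qed

definition index_of :: "'v \<Rightarrow> 'i option" where
  "index_of z = (if z \<in> e ` I then Some (inv_into I e z) else None)"

lemma mem_slot_index_of: "z \<in> V \<union> e ` I \<Longrightarrow> z \<in> slot (index_of z)"
  by (auto simp: index_of_def u_set_def f_inv_into_f)

lemma index_of_in_Iv: "index_of z \<in> Iv I"
  by (auto simp: index_of_def Iv_def inv_into_into)

lemma index_of_e: "a \<in> I \<Longrightarrow> index_of (e a) = Some a"
  using inj_e by (simp add: index_of_def)

lemma monomial_amap:
  assumes len: "length zs = n" and zs: "\<forall>r<n. zs ! r \<in> V \<union> e ` I" and nz: "prd zs \<noteq> 0"
  obtains t where "amap id (map index_of zs) = {t}" "prd zs \<in> prod_idx id (map index_of zs)"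
proof -
  have "prd zs = prod_perm n prd id zs" using len by (simp add: prod_perm_eq_permute_list)
  moreover have "\<forall>r<n. zs ! r \<in> map slot (map index_of zs) ! r" using zs len mem_slot_index_of by simp
  ultimately have "prd zs \<in> prod_idx id (map index_of zs)"
    using len unfolding prod_sets_def by (blast intro: span_base)
  moreover have "set (map index_of zs) \<subseteq> Iv I" using index_of_in_Iv by auto
  ultimately show ?thesis using amap_singleton[of "map index_of zs" id] len nz that by auto
qed

lemma monomial_in_V_basis_product:
  assumes len: "length zs = n" and zs: "\<forall>r<n. zs ! r \<in> V \<union> e ` I"
    and r0: "r0 < n" "zs ! r0 = e a" "a \<in> I"
    and t: "amap id (map index_of zs) = {None}"
  shows "prd zs \<in> basis_products {b. b = a \<or> adjacent a b}"
proof -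
  define js where "js = map index_of zs"
  have js: "length js = n" "set js \<subseteq> Iv I" using len index_of_in_Iv by (auto simp: js_def)
  have js_r0: "js ! r0 = Some a" using r0 len by (simp add: js_def index_of_e)
  have "None \<notin> set js"
  proof
    assume "None \<in> set js"
    moreover have "\<exists>x\<in>set js. x \<noteq> None" using js_r0 r0 js(1) by (metis nth_mem option.distinct(1))
    ultimately obtain j where "j \<in> I" "prod_idx id js \<subseteq> line scale (e j)"
      using prod_idx_mixed[OF js] by blast
    moreover have "prod_idx id js \<noteq> {0}" "prod_idx id js \<subseteq> V"
      using None_in_amapD[of id js] t by (auto simp: js_def)
    ultimately show False using line_Int_V prod_idx_nonzero by blast
  qed
  then have slots: "zs ! r = e (the (js ! r)) \<and> (the (js ! r) = a \<or> adjacent a (the (js ! r)))"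
    if r: "r < n" for r
  proof -
    obtain b where b: "js ! r = Some b" using \<open>None \<notin> set js\<close> r js(1) by (metis nth_mem option.exhaust)
    have "zs ! r = e b" using mem_slot_index_of[of "zs ! r"] zs r len b by (simp add: js_def u_set_def)
    moreover have "b = a \<or> adjacent a b"
      using adjacent_two_slots[OF js permutes_id _ r0(1) r _ js_r0 b] t js_r0 b by (cases "r = r0") (auto simp: js_def)
    ultimately show ?thesis using b by simp
  qed
  have "zs = map e (map (\<lambda>r. the (js ! r)) [0..<n])" using len slots by (intro nth_equalityI) auto
  then show ?thesis unfolding basis_products_def using slots by fastforce
qed

text \<open>A nonzero monomial containing \<open>e a\<close> lies either on a line \<open>F e j\<close> with \<open>j\<close> adjacent to
  \<open>a\<close>, or in \<open>V\<close>, and then all of its entries are basis vectors adjacent to \<open>a\<close>.\<close>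
lemma monomial_mem_J_class:
  assumes a: "a \<in> cls i" and len: "length zs = n" and r0: "r0 < n" "zs ! r0 = e a"
    and zs: "\<forall>r<n. zs ! r \<in> V \<union> e ` I"
  shows "prd zs \<in> Jc i"
proof (cases "prd zs = 0")
  case True
  then show ?thesis using subspace_J_class subspace_0 by simp
next
  case False
  define js where "js = map index_of zs"
  have js: "length js = n" "set js \<subseteq> Iv I" using len index_of_in_Iv by (auto simp: js_def)
  have aI: "a \<in> I" using a conn_class_subset by blast
  obtain t where t: "amap id js = {t}" and P: "prd zs \<in> prod_idx id js"
    using monomial_amap[OF len zs False] unfolding js_def by blast
  show ?thesis
  proof (cases t)
    case (Some j)
    have "js ! r0 = Some a" using r0 len aI by (simp add: js_def index_of_e)
    then have "j \<in> cls i"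
      using adjacent_slot_to_value[OF js permutes_id _ r0(1)] t Some a conn_class_adjacent by blast
    then have "line scale (e j) \<subseteq> Wc i" unfolding line_eq_span W_class_eq by (intro span_mono) auto
    moreover have "prod_idx id js \<subseteq> line scale (e j)" using Some_in_amapD[of j id js] t Some by simp
    ultimately show ?thesis using P W_class_subset_J_class by blast
  next
    case None
    have "{b. b = a \<or> adjacent a b} \<subseteq> cls i" using a conn_class_adjacent by auto
    moreover have "prd zs \<in> basis_products {b. b = a \<or> adjacent a b}"
      using monomial_in_V_basis_product[OF len zs r0 aI] t None by (simp add: js_def)
    ultimately have "prd zs \<in> span (basis_products (cls i))"
      using basis_products_mono by (blast intro: span_base)
    moreover have "prd zs \<in> V" using None_in_amapD[of id js] t None P by auto
    ultimately show ?thesis using V_class_subset_J_class unfolding V_class_eq by blast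
  qed
qed

lemma monomial_eq_0:
  assumes ab: "a \<in> I" "b \<in> I" "\<not> conn a b" and len: "length zs = n"
    and r: "r0 < n" "r1 < n" "r0 \<noteq> r1" "zs ! r0 = e a" "zs ! r1 = e b"
    and zs: "\<forall>r<n. zs ! r \<in> V \<union> e ` I"
  shows "prd zs = 0"
proof (rule ccontr)
  assume nz: "prd zs \<noteq> 0"
  define js where "js = map index_of zs"
  have js: "length js = n" "set js \<subseteq> Iv I" using len index_of_in_Iv by (auto simp: js_def)
  obtain t where "amap id js = {t}" using monomial_amap[OF len zs nz] unfolding js_def by blast
  then have "adjacent a b"
    using adjacent_two_slots[OF js permutes_id _ r(1-3)] r ab len by (simp add: js_def index_of_e)
  then show False using ab connected_adjacent connected_iff by blast
qed

lemma absorbs_basis: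
  assumes a: "a \<in> cls i"
  shows "absorbs {e a} (Jc i)"
  unfolding absorbs_def
proof (intro allI impI)
  fix zs r assume zs: "length zs = n" "r < n" "zs ! r \<in> {e a}"
  let ?A = "\<lambda>q. if q = r then {e a} else V \<union> e ` I"
  show "prd zs \<in> Jc i"
  proof (rule prd_mem_subspace_from_spans[OF subspace_J_class zs(1), of ?A])
    show "\<forall>q<n. zs ! q \<in> span (?A q)" using zs span_V_basis by (auto intro: span_base)
    fix ys assume ys: "length ys = n" "\<forall>q<n. ys ! q \<in> ?A q"
    have "\<forall>q<n. ys ! q \<in> V \<union> e ` I" using ys(2) a conn_class_subset by (metis Un_iff image_eqI singletonD subsetD)
    moreover have "ys ! r = e a" using ys(2)[rule_format, OF zs(2)] by simp
    ultimately show "prd ys \<in> Jc i" using monomial_mem_J_class[OF a ys(1) zs(2)] by simp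
  qed
qed

lemma annihilates_basis:
  assumes ab: "a \<in> I" "b \<in> I" "\<not> conn a b"
  shows "annihilates {e a} {e b}"
  unfolding annihilates_def
proof (intro allI impI)
  fix zs r r' assume zs: "length zs = n" "r < n" "r' < n" "r \<noteq> r'" "zs ! r \<in> {e a}" "zs ! r' \<in> {e b}"
  let ?A = "\<lambda>q. if q = r then {e a} else if q = r' then {e b} else V \<union> e ` I"
  have "prd zs \<in> {0}"
  proof (rule prd_mem_subspace_from_spans[OF subspace_single_0 zs(1), of ?A])
    show "\<forall>q<n. zs ! q \<in> span (?A q)" using zs span_V_basis by (auto intro: span_base)
    fix ys assume ys: "length ys = n" "\<forall>q<n. ys ! q \<in> ?A q"
    have "\<forall>q<n. ys ! q \<in> V \<union> e ` I" using ys(2) ab by (metis Un_iff image_eqI singletonD)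
    moreover have "ys ! r = e a" "ys ! r' = e b"
      using ys(2)[rule_format, OF zs(2)] ys(2)[rule_format, OF zs(3)] zs(4) by simp_all
    ultimately show "prd ys \<in> {0}" using monomial_eq_0[OF ab ys(1) zs(2-4)] by simp
  qed
  then show "prd zs = 0" by simp
qed

lemma absorbs_basis_products:
  assumes C: "C \<subseteq> I" and T: "subspace T" and absorbs_C: "absorbs (e ` C) T"
  shows "absorbs (basis_products C) T"
  unfolding absorbs_def
proof (intro allI impI)
  fix zs r assume zs: "length zs = n" "r < n" "zs ! r \<in> basis_products C"
  let ?A = "\<lambda>q. if q = r then basis_products C else {x. homogeneous Lg x}"
  show "prd zs \<in> T"
  proof (rule prd_mem_subspace_from_spans[OF T zs(1), of ?A])
    show "\<forall>q<n. zs ! q \<in> span (?A q)" using zs span_homogeneous by (auto intro: span_base)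
    fix ys assume ys: "length ys = n" "\<forall>q<n. ys ! q \<in> ?A q"
    have "ys ! r \<in> basis_products C" using ys(2)[rule_format, OF zs(2)] by simp
    then obtain ks where ks: "ys ! r = prd (map e ks)" "length ks = n" "set ks \<subseteq> C"
      unfolding basis_products_def by blast
    show "prd ys \<in> T"
    proof (rule prd_nested_mem_subspace[OF T ys(1) zs(2) ks(1)])
      show "\<forall>q<n. homogeneous Lg (map e ks ! q)" using ks C homogeneous_e by (auto dest: nth_mem)
      show "\<forall>q<n. q \<noteq> r \<longrightarrow> homogeneous Lg (ys ! q)" using ys(2) by auto
      fix OL IL i j \<sigma> assume i: "i < n" and \<sigma>: "\<sigma> permutes {..<n}" and OL: "length OL = n"
        and others: "\<forall>q<n. q \<noteq> i \<longrightarrow> OL ! q = map e ks ! \<sigma> q"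
      define q where "q = (if i = 0 then 1 else 0 :: nat)"
      have q: "q < n" "q \<noteq> i" using two_le_n by (auto simp: q_def)
      moreover have "ks ! \<sigma> q \<in> C" using q ks permutes_in_image[OF \<sigma>] nth_mem by fastforce
      ultimately have "OL ! q \<in> e ` C" using others ks(2) permutes_in_image[OF \<sigma>] by auto
      then show "prd OL \<in> T" using absorbs_C OL q unfolding absorbs_def by blast
    qed (use ks in simp)
  qed
qed

lemma annihilates_basis_products:
  assumes C: "C \<subseteq> I" and B: "B \<subseteq> {x. homogeneous Lg x}"
    and annihilates_C: "\<forall>c\<in>C. annihilates {e c} B"
  shows "annihilates (basis_products C) B"
  unfolding annihilates_def
proof (intro allI impI)
  fix zs r r' assume zs: "length zs = n" "r < n" "r' < n" "r \<noteq> r'"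
    "zs ! r \<in> basis_products C" "zs ! r' \<in> B"
  let ?A = "\<lambda>q. if q = r then basis_products C else if q = r' then B else {x. homogeneous Lg x}"
  have "prd zs \<in> {0}"
  proof (rule prd_mem_subspace_from_spans[OF subspace_single_0 zs(1), of ?A])
    show "\<forall>q<n. zs ! q \<in> span (?A q)" using zs span_homogeneous by (auto intro: span_base)
    fix ys assume ys: "length ys = n" "\<forall>q<n. ys ! q \<in> ?A q"
    have "ys ! r \<in> basis_products C" using ys(2)[rule_format, OF zs(2)] by simp
    then obtain ks where ks: "ys ! r = prd (map e ks)" "length ks = n" "set ks \<subseteq> C"
      unfolding basis_products_def by blast
    have ys_r': "ys ! r' \<in> B" using ys(2) zs(3,4) by auto
    show "prd ys \<in> {0}"
    proof (rule prd_nested_mem_subspace[OF subspace_single_0 ys(1) zs(2) ks(1)])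
      show "\<forall>q<n. homogeneous Lg (map e ks ! q)" using ks C homogeneous_e by (auto dest: nth_mem)
      show "\<forall>q<n. q \<noteq> r \<longrightarrow> homogeneous Lg (ys ! q)" using ys(2) B by (metis mem_Collect_eq subsetD)
      fix OL IL i j \<sigma> assume i: "i < n" and j: "j < n" and \<sigma>: "\<sigma> permutes {..<n}"
        and OL: "length OL = n" "OL ! i = prd IL" and IL: "length IL = n" "IL ! j = map e ks ! \<sigma> i"
        and inner: "\<forall>q<n. q \<noteq> r \<longrightarrow> (\<exists>p<n. p \<noteq> j \<and> IL ! p = ys ! q)"
      obtain p where p: "p < n" "p \<noteq> j" "IL ! p = ys ! r'" using inner zs(3,4) by blast
      have "ks ! \<sigma> i \<in> C" using ks permutes_in_image[OF \<sigma>] i by (auto dest: nth_mem)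
      then have "prd IL = 0"
        using annihilates_C IL p j ys_r' permutes_in_image[OF \<sigma>] i ks(2)
        unfolding annihilates_def by (metis nth_map singletonI lessThan_iff)
      then show "prd OL \<in> {0}" using prd_eq_0_if_slot_0[OF OL(1) i] OL(2) by simp
    qed (use ks in simp)
  qed
  then show "prd zs = 0" by simp
qed

lemma annihilates_generators:
  assumes C: "C \<subseteq> I" "D \<subseteq> I" and nc: "\<forall>c\<in>C. \<forall>d\<in>D. \<not> conn c d"
  shows "annihilates (generators C) (generators D)"
proof -
  have basis: "annihilates {e c} (e ` D)" if "c \<in> C" for c
    using annihilates_basis nc that C unfolding annihilates_def by blast
  then have "annihilates (e ` C) (e ` D)" unfolding annihilates_def by blast
  moreover have "annihilates (basis_products C) (e ` D)"
    using basis C homogeneous_e by (intro annihilates_basis_products) auto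
  ultimately have CD: "annihilates (generators C) (e ` D)"
    unfolding generators_def by (simp add: annihilates_Un Un_commute)
  have "annihilates {e d} (generators C)" if "d \<in> D" for d
    using annihilates_sym[OF CD] that unfolding annihilates_def by blast
  then have "annihilates (basis_products D) (generators C)"
    using C generators_homogeneous by (intro annihilates_basis_products) auto
  then show ?thesis
    using CD unfolding generators_def by (metis annihilates_Un annihilates_sym Un_commute)
qed

lemma graded_V_class: "graded_subspace scale Lg (Vc i)"
  unfolding V_class_eq using basis_products_homogeneous[OF conn_class_subset]
  by (intro graded_subspace_Int graded_subspace_span graded_V)

lemma graded_W_class: "graded_subspace scale Lg (Wc i)"
  unfolding W_class_eq using homogeneous_e conn_class_subset by (intro graded_subspace_span) auto

lemma graded_J_class: "graded_subspace scale Lg (Jc i)"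
  unfolding J_class_def using graded_V_class graded_W_class by (rule graded_subspace_setsum2)

lemma J_class_ideal:
  assumes "i \<in> I"
  shows "color_gLt_ideal scale Lg n prd (Jc i)"
proof -
  have "absorbs (e ` cls i) (Jc i)" using absorbs_basis unfolding absorbs_def by blast
  then have "absorbs (generators (cls i)) (Jc i)"
    using absorbs_basis_products[OF conn_class_subset subspace_J_class]
    unfolding generators_def absorbs_def by blast
  then have "absorbs (Jc i) (Jc i)"
    using absorbs_mono[OF absorbs_span[OF subspace_J_class] J_class_subset_span] by blast
  then show ?thesis
    using prod_sets_subset_if_absorbs[OF subspace_J_class] graded_J_class two_le_n
    by (simp add: color_gLt_ideal_def)
qed

lemma J_class_inherited_basis:
  assumes i: "i \<in> I"
  shows "inherited_qm_basis scale Lg V W I e (Jc i)"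
proof -
  have VV: "Vc i \<subseteq> V" unfolding V_class_eq by blast
  have WW: "Wc i \<subseteq> W" unfolding W_class_eq span_e[symmetric] using conn_class_subset by (intro span_mono) auto
  have "e i \<in> Wc i" unfolding W_class_eq using mem_conn_class_self[OF i] by (auto intro: span_base)
  then have "Wc i \<noteq> {0}" using e_neq_0[OF i] by auto
  moreover have "\<not> dependent (e ` cls i)"
    using independent_e dependent_mono[of "e ` cls i" "e ` I"] conn_class_subset by blast
  moreover have "Vc i \<inter> Wc i = {0}"
    using VV WW V_plus_W subspace_V_class subspace_0 span_zero
    by (auto simp: direct_sum_eq_def W_class_eq)
  then have "direct_sum_eq (Jc i) (Vc i) (Wc i)" by (simp add: direct_sum_eq_def J_class_def)
  ultimately show ?thesis unfolding inherited_qm_basis_def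
    using VV WW graded_V_class graded_W_class conn_class_subset W_class_eq
    by (intro exI[where x = "Vc i"] exI[where x = "Wc i"] exI[where x = "cls i"]) simp
qed

lemma J_classes_orthogonal:
  assumes "cls i \<noteq> cls h" and \<sigma>: "\<sigma> permutes {..<n}"
  shows "prod_sets scale n prd \<sigma> (Jc i # Jc h # replicate (n - 2) UNIV) = {0}"
proof -
  have "annihilates (generators (cls i)) (generators (cls h))"
    using annihilates_generators[OF conn_class_subset conn_class_subset]
      not_connected_if_conn_class_neq assms(1) by blast
  then have "annihilates (Jc i) (Jc h)"
    using annihilates_mono[OF annihilates_span J_class_subset_span J_class_subset_span] by blast
  then show ?thesis using prod_sets_eq_0_if_annihilates[OF _ \<sigma>] two_le_n by simp
qed

lemma J_classes_complement:
  assumes U: "subspace U" and V: "direct_sum_eq V U (span (\<Union>i\<in>I. Vc i))"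
  shows "direct_sum_eq UNIV U (span (\<Union>i\<in>I. Jc i))"
proof (rule direct_sum_exchange[OF V_plus_W V subspace_V U subspace_span subspace_span])
  show "span (\<Union>i\<in>I. Vc i) \<subseteq> span (\<Union>i\<in>I. Jc i)"
    using V_class_subset_J_class by (intro span_mono) blast
  have "e ` I \<subseteq> (\<Union>i\<in>I. Jc i)"
    using mem_conn_class_self W_class_subset_J_class unfolding W_class_eq by (blast intro: span_base)
  then show "W \<subseteq> span (\<Union>i\<in>I. Jc i)" unfolding span_e[symmetric] by (rule span_mono)
  have "Jc i \<subseteq> setsum2 (span (\<Union>i\<in>I. Vc i)) W" if "i \<in> I" for i
  proof -
    have "Wc i \<subseteq> W" unfolding W_class_eq span_e[symmetric] using conn_class_subset by (intro span_mono) auto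
    then show ?thesis using that unfolding J_class_def setsum2_def by (blast intro: span_base)
  qed
  then show "span (\<Union>i\<in>I. Jc i) \<subseteq> setsum2 (span (\<Union>i\<in>I. Vc i)) W"
    using subspace_setsum2[OF subspace_span subspace_W] by (intro span_minimal) auto
qed

end

theorem theorem3p12:
  fixes scale :: "'f::field \<Rightarrow> 'v::ab_group_add \<Rightarrow> 'v"
    and Lg :: "'g::ab_group_add \<Rightarrow> 'v set"
    and \<epsilon> :: "'g \<Rightarrow> 'g \<Rightarrow> 'f"
    and n :: nat
    and prd :: "'v list \<Rightarrow> 'v"
    and V W :: "'v set"
    and I :: "'i set"
    and e :: "'i \<Rightarrow> 'v"
  assumes n2: "n \<ge> 2"
    and eps: "bicharacter \<epsilon>"
    and alg: "color_gLt_algebra scale Lg \<epsilon> n prd"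
    and qmb: "qm_basis scale Lg n prd V W I e"
  shows
    "(\<forall>U. module.subspace scale U \<and>
          direct_sum_eq V U (module.span scale (\<Union>i\<in>I. V_class scale n prd V I e i)) \<longrightarrow>
          direct_sum_eq UNIV U (module.span scale (\<Union>i\<in>I. J_class scale n prd V I e i)))
     \<and> (\<forall>i\<in>I. color_gLt_ideal scale Lg n prd (J_class scale n prd V I e i)
              \<and> inherited_qm_basis scale Lg V W I e (J_class scale n prd V I e i))
     \<and> (\<forall>i\<in>I. \<forall>h\<in>I. conn_class scale n prd V I e i \<noteq> conn_class scale n prd V I e h \<longrightarrow>
          (\<forall>\<sigma>. \<sigma> permutes {..<n} \<longrightarrow>
             prod_sets scale n prd \<sigma>
               (J_class scale n prd V I e i # J_class scale n prd V I e h # replicate (n - 2) UNIV) = {0}))"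
proof -
  interpret qm_gLt_algebra scale Lg \<epsilon> n prd V W I e
    using n2 alg qmb by unfold_locales
  show ?thesis
    using J_classes_complement J_class_ideal J_class_inherited_basis J_classes_orthogonal by blast
qed

end
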